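(* Assume that $\mathcal{G}_{\log}\neq\emptyset$, that $\mathcal{X}\cap\Omega_{\log}$ is compact, and that the initial point $\mathbf{x}_0\in\mathcal{X}$ satisfies $g_\ell(\mathbf{x}_0)<0$ for all $\ell\in\mathcal{G}_{\log}$. Let $\{\mathbf{x}_k\}$ be the sequence of iterates generated by Algorithm LOG-DS, and assume that the sets of poll directions $\{\mathcal{D}_k\}$ satisfy the Poll Direction Assumption. Let $\mathcal{K}_\rho=\{k\in\mathbb{N}\mid\rho_{k+1}<\rho_k\}$. Then every limit point $\mathbf{x}^*$ of the subsequence $\{\mathbf{x}_k\}_{k\in\mathcal{K}_\rho}$ that satisfies the MFCQ is a stationary point of Problem (P).
   Context: Problem (P): minimize $f(\mathbf{x})$ subject to $g_\ell(\mathbf{x})\le 0$ ($\ell=1,\dots,m$), $h_j(\mathbf{x})=0$ ($j=1,\dots,p$), $\mathbf{x}\in\mathcal{X}$, where $\mathcal{X}=\{\mathbf{x}\in\mathbb{R}^n\mid \mathbf{A}\mathbf{x}\le\mathbf{b}\}$ with $\mathbf{A}\in\mathbb{R}^{q\times n}$ (rows $\mathbf{a}_i^\top$), $\mathbf{b}\in\mathbb{R}^q$, and $f,g_\ell,h_j$ are real-valued and continuously differentiable on an open set containing $\mathcal{X}$. Feasible set $\mathcal{F}=\{\mathbf{x}\in\mathcal{X}\mid g_\ell(\mathbf{x})\le0\ \forall\ell,\ h_j(\mathbf{x})=0\ \forall j\}$. Given an initial point $\mathbf{x}_0$, set $\mathcal{G}_{\log}=\{\ell\in\{1,\dots,m\}\mid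 g_\ell(\mathbf{x}_0)<0\}$, $\mathcal{G}_{\rm ext}=\{\ell\in\{1,\dots,m\}\mid g_\ell(\mathbf{x}_0)\ge 0\}$, and $\Omega_{\log}=\{\mathbf{x}\in\mathbb{R}^n\mid g_\ell(\mathbf{x})\le 0,\ \ell\in\mathcal{G}_{\log}\}$. For $\rho>0$ and $\nu\in(1,2]$ the merit function is $$Z(\mathbf{x};\rho)=f(\mathbf{x})-\rho\sum_{\ell\in\mathcal{G}_{\log}}\log(-g_\ell(\mathbf{x}))+\frac{1}{\rho^{\nu-1}}\sum_{\ell\in\mathcal{G}_{\rm ext}}(\max\{g_\ell(\mathbf{x}),0\})^\nu+\frac{1}{\rho^{\nu-1}}\sum_{j=1}^p|h_j(\mathbf{x})|^\nu$$ if $\mathbf{x}\in\mathcal{X}$ and $g_\ell(\mathbf{x})<0$ for all $\ell\in\mathcal{G}_{\log}$, and $Z(\mathbf{x};\rho)=+\infty$ otherwise. A forcing function is a continuous nondecreasing $\xi:[0,+\infty)\to[0,+\infty)$ with $\xi(t)/t\to0$ as $t\downarrow0$ and such that $\xi(t_k)\to0$ implies $t_k\to0$. Algorithm LOG-DS. Data: $\mathbf{x}_0\in\mathcal{X}$ with $g_\ell(\mathbf{x}_0)<0$ for $\ell\in\mathcal{G}_{\log}$; a collection $\mathcal{D}$ of finite sets of unit vectors in $\mathbb{R}^n$; $\alpha_0>0$; $\rho_0>0$; $\nu\in(1,2]$; $\theta_\alpha,\theta_\rho\in(0,1)$; $\phi\ge1$; $\beta>1$; a forcing function $\xi$. At each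 iteration $k=0,1,2,\dots$: (Search, optional) if some $\mathbf{z}_k\in\mathcal{X}$ with $Z(\mathbf{z}_k;\rho_k)\le Z(\mathbf{x}_k;\rho_k)-\xi(\alpha_k)$ is found, set $\mathbf{x}_{k+1}=\mathbf{z}_k$, $\alpha_{k+1}=\phi\alpha_k$, $\rho_{k+1}=\rho_k$ (successful iteration) and go to iteration $k+1$. Otherwise (Poll) select $\mathcal{D}_k\in\mathcal{D}$; if some $\mathbf{d}\in\mathcal{D}_k$ satisfies $\mathbf{x}_k+\alpha_k\mathbf{d}\in\mathcal{X}$ and $Z(\mathbf{x}_k+\alpha_k\mathbf{d};\rho_k)\le Z(\mathbf{x}_k;\rho_k)-\xi(\alpha_k)$, set $\mathbf{x}_{k+1}=\mathbf{x}_k+\alpha_k\mathbf{d}$, $\alpha_{k+1}=\phi\alpha_k$, $\rho_{k+1}=\rho_k$ (successful iteration). Otherwise the iteration is unsuccessful: set $\mathbf{x}_{k+1}=\mathbf{x}_k$, $\alpha_{k+1}=\theta_\alpha\alpha_k$, and (Penalty-barrier update) with $(g_{\min})_k=\min_{\ell\in\mathcal{G}_{\log}}|g_\ell(\mathbf{x}_k)|$, set $\rho_{k+1}=\theta_\rho\rho_k$ if $\alpha_{k+1}\le\min\{\rho_k^\beta,(g_{\min})_k^2\}$, and $\rho_{k+1}=\rho_k$ otherwise. Active sets and cones: for $\mathbf{x}\in\mathcal{X}$, $\mathcal{I}_\mathcal{X}(\mathbf{x})=\{i\mid \mathbf{a}_i^\top\mathbf{x}=b_i\}$ and $\mathcal{T}_\mathcal{X}(\mathbf{x})=\{\mathbf{d}\mid\mathbf{a}_i^\top\mathbf{d}\le0,\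 i\in\mathcal{I}_\mathcal{X}(\mathbf{x})\}$; for $\varepsilon>0$, $\mathcal{I}_\mathcal{X}(\mathbf{x},\varepsilon)=\{i\mid\mathbf{a}_i^\top\mathbf{x}\ge b_i-\varepsilon\}$ and $\mathcal{T}_\mathcal{X}(\mathbf{x},\varepsilon)=\{\mathbf{d}\mid\mathbf{a}_i^\top\mathbf{d}\le0,\ i\in\mathcal{I}_\mathcal{X}(\mathbf{x},\varepsilon)\}$. Poll Direction Assumption: each $\mathcal{D}_k$ consists of vectors of Euclidean norm $1$; there is $\bar\varepsilon>0$ such that for every $k$ and every $\varepsilon\in(0,\bar\varepsilon]$, $\operatorname{cone}(\mathcal{D}_k\cap\mathcal{T}_\mathcal{X}(\mathbf{x}_k,\varepsilon))=\mathcal{T}_\mathcal{X}(\mathbf{x}_k,\varepsilon)$ (cone = set of nonnegative linear combinations); and $\bigcup_k\mathcal{D}_k$ is a finite set. MFCQ at $\mathbf{x}\in\mathcal{X}$: (a) there is no nonzero $(\alpha_1,\dots,\alpha_p)$ with $(\sum_{i=1}^p\alpha_i\nabla h_i(\mathbf{x}))^\top\mathbf{d}\ge0$ for all $\mathbf{d}\in\mathcal{T}_\mathcal{X}(\mathbf{x})$; and (b) there exists $\mathbf{d}\in\mathcal{T}_\mathcal{X}(\mathbf{x})$ with $\nabla g_\ell(\mathbf{x})^\top\mathbf{d}<0$ for all $\ell\in\mathcal{I}_+(\mathbf{x})=\{\ell\mid g_\ell(\mathbf{x})\ge0\}$ and $\nabla h_j(\mathbf{x})^\top\mathbf{d}=0$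 for all $j=1,\dots,p$. Stationary point: $\mathbf{x}^*\in\mathcal{F}$ for which there exist $\lambda^*\in\mathbb{R}^m$, $\mu^*\in\mathbb{R}^p$ with $\nabla_xL(\mathbf{x}^*,\lambda^*,\mu^* )^\top(\mathbf{x}-\mathbf{x}^* )\ge0$ for all $\mathbf{x}\in\mathcal{X}$, $(\lambda^* )^\top g(\mathbf{x}^* )=0$ and $\lambda^*\ge0$, where $L(\mathbf{x},\lambda,\mu)=f(\mathbf{x})+\lambda^\top g(\mathbf{x})+\mu^\top h(\mathbf{x})$. *)

theory Defs
  imports "HOL-Analysis.Analysis"
begin

definition grad :: "('a::euclidean_space \<Rightarrow> real) \<Rightarrow> 'a \<Rightarrow> 'a" where
  "grad f x = (SOME D. (f has_derivative (\<lambda>h. D \<bullet> h)) (at x))"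

definition C1_on :: "'a::euclidean_space set \<Rightarrow> ('a \<Rightarrow> real) \<Rightarrow> bool" where
  "C1_on U f \<longleftrightarrow> (\<forall>x\<in>U. f differentiable (at x)) \<and> continuous_on U (grad f)"

definition polyX :: "(nat \<Rightarrow> 'a::euclidean_space) \<Rightarrow> (nat \<Rightarrow> real) \<Rightarrow> nat \<Rightarrow> 'a set" where
  "polyX A b q = {x. \<forall>i<q. A i \<bullet> x \<le> b i}"

definition active_set :: "(nat \<Rightarrow> 'a::euclidean_space) \<Rightarrow> (nat \<Rightarrow> real) \<Rightarrow> nat \<Rightarrow> 'a \<Rightarrow> nat set" where
  "active_set A b q x = {i. i < q \<and> A i \<bullet> x = b i}"

definition tangent_X :: "(nat \<Rightarrow> 'a::euclidean_space) \<Rightarrow> (nat \<Rightarrow> real) \<Rightarrow> nat \<Rightarrow> 'a \<Rightarrow> 'a set" where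
  "tangent_X A b q x = {d. \<forall>i\<in>active_set A b q x. A i \<bullet> d \<le> 0}"

definition eps_active_set :: "(nat \<Rightarrow> 'a::euclidean_space) \<Rightarrow> (nat \<Rightarrow> real) \<Rightarrow> nat \<Rightarrow> 'a \<Rightarrow> real \<Rightarrow> nat set" where
  "eps_active_set A b q x \<epsilon> = {i. i < q \<and> A i \<bullet> x \<ge> b i - \<epsilon>}"

definition eps_tangent_X :: "(nat \<Rightarrow> 'a::euclidean_space) \<Rightarrow> (nat \<Rightarrow> real) \<Rightarrow> nat \<Rightarrow> 'a \<Rightarrow> real \<Rightarrow> 'a set" where
  "eps_tangent_X A b q x \<epsilon> = {d. \<forall>i\<in>eps_active_set A b q x \<epsilon>. A i \<bullet> d \<le> 0}"

definition pos_span :: "'a::real_vector set \<Rightarrow> 'a set" where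
  "pos_span S = {y. \<exists>c. (\<forall>d\<in>S. c d \<ge> 0) \<and> y = (\<Sum>d\<in>S. c d *\<^sub>R d)}"

definition forcing_function :: "(real \<Rightarrow> real) \<Rightarrow> bool" where
  "forcing_function \<xi> \<longleftrightarrow>
     continuous_on {0..} \<xi> \<and> mono_on {0..} \<xi> \<and> (\<forall>t\<ge>0. \<xi> t \<ge> 0) \<and>
     ((\<lambda>t. \<xi> t / t) \<longlongrightarrow> 0) (at_right 0) \<and>
     (\<forall>tk::nat \<Rightarrow> real. (\<forall>k. tk k \<ge> 0) \<longrightarrow> (\<lambda>k. \<xi> (tk k)) \<longlonglongrightarrow> 0 \<longrightarrow> tk \<longlonglongrightarrow> 0)"

definition Glog :: "(nat \<Rightarrow> 'a \<Rightarrow> real) \<Rightarrow> nat \<Rightarrow> 'a \<Rightarrow> nat set" where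
  "Glog g m x0 = {l. l < m \<and> g l x0 < 0}"

definition Gext :: "(nat \<Rightarrow> 'a \<Rightarrow> real) \<Rightarrow> nat \<Rightarrow> 'a \<Rightarrow> nat set" where
  "Gext g m x0 = {l. l < m \<and> g l x0 \<ge> 0}"

definition Omega_log :: "(nat \<Rightarrow> 'a \<Rightarrow> real) \<Rightarrow> nat \<Rightarrow> 'a \<Rightarrow> 'a set" where
  "Omega_log g m x0 = {x. \<forall>l\<in>Glog g m x0. g l x \<le> 0}"

definition meritZ ::
  "('a::euclidean_space \<Rightarrow> real) \<Rightarrow> (nat \<Rightarrow> 'a \<Rightarrow> real) \<Rightarrow> (nat \<Rightarrow> 'a \<Rightarrow> real) \<Rightarrow> nat \<Rightarrow> nat \<Rightarrow>
   (nat \<Rightarrow> 'a) \<Rightarrow> (nat \<Rightarrow> real) \<Rightarrow> nat \<Rightarrow> 'a \<Rightarrow> real \<Rightarrow> real \<Rightarrow> 'a \<Rightarrow> ereal" where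
  "meritZ f g h m p A b q x0 \<nu> \<rho> x =
     (if x \<in> polyX A b q \<and> (\<forall>l\<in>Glog g m x0. g l x < 0) then
        ereal (f x - \<rho> * (\<Sum>l\<in>Glog g m x0. ln (- g l x))
               + (1 / \<rho> powr (\<nu> - 1)) * (\<Sum>l\<in>Gext g m x0. (max (g l x) 0) powr \<nu>)
               + (1 / \<rho> powr (\<nu> - 1)) * (\<Sum>j<p. \<bar>h j x\<bar> powr \<nu>))
      else \<infinity>)"

text \<open>The search step is optional, so an
  unsuccessful iteration only requires failure of the poll step.\<close>
definition logds_step ::
  "('a::euclidean_space \<Rightarrow> real) \<Rightarrow> (nat \<Rightarrow> 'a \<Rightarrow> real) \<Rightarrow> (nat \<Rightarrow> 'a \<Rightarrow> real) \<Rightarrow> nat \<Rightarrow> nat \<Rightarrow>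
   (nat \<Rightarrow> 'a) \<Rightarrow> (nat \<Rightarrow> real) \<Rightarrow> nat \<Rightarrow> real \<Rightarrow> real \<Rightarrow> real \<Rightarrow> real \<Rightarrow> real \<Rightarrow>
   (real \<Rightarrow> real) \<Rightarrow> (nat \<Rightarrow> 'a) \<Rightarrow> (nat \<Rightarrow> real) \<Rightarrow> (nat \<Rightarrow> real) \<Rightarrow> (nat \<Rightarrow> 'a set) \<Rightarrow> nat \<Rightarrow> bool" where
  "logds_step f g h m p A b q \<nu> \<theta>\<alpha> \<theta>\<rho> \<phi> \<beta> \<xi> xs \<alpha>s \<rho>s Ds k \<longleftrightarrow>
    (let Zk = meritZ f g h m p A b q (xs 0) \<nu> (\<rho>s k);
         X = polyX A b q;
         suff = (\<lambda>z. Zk z \<le> Zk (xs k) - ereal (\<xi> (\<alpha>s k)))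
     in
     \<comment> \<open>successful search step\<close>
     (xs (Suc k) \<in> X \<and> suff (xs (Suc k)) \<and>
        \<alpha>s (Suc k) = \<phi> * \<alpha>s k \<and> \<rho>s (Suc k) = \<rho>s k)
     \<or>
     \<comment> \<open>successful poll step\<close>
     (\<exists>d\<in>Ds k. xs k + \<alpha>s k *\<^sub>R d \<in> X \<and> suff (xs k + \<alpha>s k *\<^sub>R d) \<and>
        xs (Suc k) = xs k + \<alpha>s k *\<^sub>R d \<and>
        \<alpha>s (Suc k) = \<phi> * \<alpha>s k \<and> \<rho>s (Suc k) = \<rho>s k)
     \<or>
     \<comment> \<open>unsuccessful iteration\<close>
     (\<not> (\<exists>d\<in>Ds k. xs k + \<alpha>s k *\<^sub>R d \<in> X \<and> suff (xs k + \<alpha>s k *\<^sub>R d)) \<and>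
        xs (Suc k) = xs k \<and> \<alpha>s (Suc k) = \<theta>\<alpha> * \<alpha>s k \<and>
        \<rho>s (Suc k) =
          (if \<alpha>s (Suc k) \<le> min (\<rho>s k powr \<beta>)
                 ((Min ((\<lambda>l. \<bar>g l (xs k)\<bar>) ` Glog g m (xs 0))) ^ 2)
           then \<theta>\<rho> * \<rho>s k else \<rho>s k)))"

definition poll_direction_assumption ::
  "(nat \<Rightarrow> 'a::euclidean_space) \<Rightarrow> (nat \<Rightarrow> real) \<Rightarrow> nat \<Rightarrow> (nat \<Rightarrow> 'a) \<Rightarrow> (nat \<Rightarrow> 'a set) \<Rightarrow> bool" where
  "poll_direction_assumption A b q xs Ds \<longleftrightarrow>
     (\<forall>k. finite (Ds k) \<and> (\<forall>d\<in>Ds k. norm d = 1)) \<and>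
     (\<exists>\<epsilon>bar>0. \<forall>k. \<forall>\<epsilon>. 0 < \<epsilon> \<and> \<epsilon> \<le> \<epsilon>bar \<longrightarrow>
        pos_span (Ds k \<inter> eps_tangent_X A b q (xs k) \<epsilon>) = eps_tangent_X A b q (xs k) \<epsilon>) \<and>
     finite (\<Union>k. Ds k)"

definition MFCQ ::
  "(nat \<Rightarrow> 'a::euclidean_space \<Rightarrow> real) \<Rightarrow> (nat \<Rightarrow> 'a \<Rightarrow> real) \<Rightarrow> nat \<Rightarrow> nat \<Rightarrow>
   (nat \<Rightarrow> 'a) \<Rightarrow> (nat \<Rightarrow> real) \<Rightarrow> nat \<Rightarrow> 'a \<Rightarrow> bool" where
  "MFCQ g h m p A b q x \<longleftrightarrow>
     (\<not> (\<exists>\<alpha>::nat \<Rightarrow> real. (\<exists>i<p. \<alpha> i \<noteq> 0) \<and>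
          (\<forall>d\<in>tangent_X A b q x. (\<Sum>i<p. \<alpha> i *\<^sub>R grad (h i) x) \<bullet> d \<ge> 0))) \<and>
     (\<exists>d\<in>tangent_X A b q x. (\<forall>l. l < m \<and> g l x \<ge> 0 \<longrightarrow> grad (g l) x \<bullet> d < 0) \<and>
          (\<forall>j<p. grad (h j) x \<bullet> d = 0))"

definition feasible_set ::
  "(nat \<Rightarrow> 'a::euclidean_space \<Rightarrow> real) \<Rightarrow> (nat \<Rightarrow> 'a \<Rightarrow> real) \<Rightarrow> nat \<Rightarrow> nat \<Rightarrow>
   (nat \<Rightarrow> 'a) \<Rightarrow> (nat \<Rightarrow> real) \<Rightarrow> nat \<Rightarrow> 'a set" where
  "feasible_set g h m p A b q =
     {x\<in>polyX A b q. (\<forall>l<m. g l x \<le> 0) \<and> (\<forall>j<p. h j x = 0)}"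

definition stationary_point ::
  "('a::euclidean_space \<Rightarrow> real) \<Rightarrow> (nat \<Rightarrow> 'a \<Rightarrow> real) \<Rightarrow> (nat \<Rightarrow> 'a \<Rightarrow> real) \<Rightarrow> nat \<Rightarrow> nat \<Rightarrow>
   (nat \<Rightarrow> 'a) \<Rightarrow> (nat \<Rightarrow> real) \<Rightarrow> nat \<Rightarrow> 'a \<Rightarrow> bool" where
  "stationary_point f g h m p A b q xs \<longleftrightarrow>
     xs \<in> feasible_set g h m p A b q \<and>
     (\<exists>lam mu :: nat \<Rightarrow> real.
        (\<forall>y\<in>polyX A b q.
           (grad f xs + (\<Sum>l<m. lam l *\<^sub>R grad (g l) xs) + (\<Sum>j<p. mu j *\<^sub>R grad (h j) xs))
             \<bullet> (y - xs) \<ge> 0) \<and>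
        (\<Sum>l<m. lam l * g l xs) = 0 \<and> (\<forall>l<m. lam l \<ge> 0))"

end

theory Submission
  imports Defs
begin

text \<open>
  Along the subsequence every poll failed and the penalty parameter was reduced, so \<open>\<rho>\<^sub>k \<rightarrow> 0\<close>,
  the update rule gives \<open>\<alpha>\<^sub>k \<le> \<rho>\<^sub>k\<^sup>\<beta> / \<theta>\<^sub>\<alpha>\<close> and hence \<open>\<alpha>\<^sub>k / \<rho>\<^sub>k \<rightarrow> 0\<close>, and it keeps
  \<open>g\<^sub>l(x\<^sub>k)\<^sup>2 \<ge> \<theta>\<^sub>\<alpha> \<alpha>\<^sub>k\<close>, so the log-barrier stays smooth on the ball of radius \<open>\<alpha>\<^sub>k\<close>
  around \<open>x\<^sub>k\<close>.  By the mean value theorem every failed poll direction \<open>d\<close> yields a point \<open>u\<^sub>k\<close>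
  in that ball with \<open>\<nabla>Z(u\<^sub>k; \<rho>\<^sub>k) \<cdot> d \<ge> -\<xi>(\<alpha>\<^sub>k) / \<alpha>\<^sub>k\<close>.  The gradient \<open>\<nabla>Z\<close> is the gradient of
  a Lagrangian whose multiplier estimates at \<open>u\<^sub>k\<close> and at \<open>x\<^sub>k\<close> differ by \<open>o(1)\<close>.  Dividing all
  multipliers by \<open>1 + \<Sum>\<lambda> + \<Sum>|\<mu>|\<close> and passing to a further subsequence gives Fritz John
  multipliers whose Lagrangian gradient has nonnegative inner product with the finitely many poll
  directions that eventually generate the tangent cone of \<open>X\<close> at \<open>x\<^sup>*\<close>, hence with the whole
  cone.  MFCQ rules out a zero weight on \<open>\<nabla>f\<close>; the multiplier estimates are then bounded, which
  together with \<open>\<rho>\<^sub>k \<rightarrow> 0\<close> forces feasibility of \<open>x\<^sup>*\<close>, and rescaling gives stationarity.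
\<close>

section \<open>Gradients\<close>

lemma grad_GDERIV:
  fixes F :: "'a::euclidean_space \<Rightarrow> real"
  assumes "F differentiable (at x)"
  shows "GDERIV F x :> grad F x"
proof -
  obtain L where L: "(F has_derivative L) (at x)"
    using assms differentiable_def by blast
  define D where "D = (\<Sum>b\<in>Basis. L b *\<^sub>R b)"
  have "L v = D \<bullet> v" for v
  proof -
    have "L v = L (\<Sum>b\<in>Basis. (v \<bullet> b) *\<^sub>R b)"
      by (simp add: euclidean_representation)
    also have "\<dots> = (\<Sum>b\<in>Basis. L b * (b \<bullet> v))"
      using has_derivative_linear[OF L]
      by (simp add: linear_sum linear_scale inner_commute mult.commute)
    also have "\<dots> = D \<bullet> v"
      by (simp add: D_def inner_sum_left)
    finally show ?thesis .
  qed
  then have "L = (\<lambda>h. D \<bullet> h)"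
    by (rule ext)
  then have "(F has_derivative (\<lambda>h. D \<bullet> h)) (at x)"
    using L by simp
  then have "(F has_derivative (\<lambda>h. grad F x \<bullet> h)) (at x)"
    unfolding grad_def by (rule someI)
  then show ?thesis
    unfolding gderiv_def by (simp add: inner_commute)
qed

lemma GDERIV_sum:
  assumes "finite I" "\<And>i. i \<in> I \<Longrightarrow> GDERIV (F i) x :> D i"
  shows "GDERIV (\<lambda>y. \<Sum>i\<in>I. F i y) x :> (\<Sum>i\<in>I. D i)"
  using assms unfolding gderiv_def by (simp add: inner_sum_right has_derivative_sum)

lemma has_real_derivative_max_0_powr:
  fixes \<nu> s :: real
  assumes "1 < \<nu>"
  shows "((\<lambda>t. max t 0 powr \<nu>) has_real_derivative \<nu> * max s 0 powr (\<nu> - 1)) (at s)"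
proof -
  consider "s > 0" | "s < 0" | "s = 0" by linarith
  then show ?thesis
  proof cases
    case 1
    have "\<forall>\<^sub>F t in nhds s. t powr \<nu> = max t 0 powr \<nu>"
      using eventually_nhds_in_open[of "{0<..}" s] 1 by (auto elim!: eventually_mono)
    note cong = DERIV_cong_ev[OF refl this refl]
    have "((\<lambda>t. t powr \<nu>) has_real_derivative \<nu> * s powr (\<nu> - 1)) (at s)"
      using has_real_derivative_powr[OF 1] by simp
    then show ?thesis
      using 1 by (simp add: cong)
  next
    case 2
    have "\<forall>\<^sub>F t in nhds s. 0 = max t 0 powr \<nu>"
      using eventually_nhds_in_open[of "{..<0}" s] 2 by (auto elim!: eventually_mono)
    from DERIV_cong_ev[OF refl this refl] DERIV_const[of 0 "at s"]
    show ?thesis using 2 by simp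
  next
    case 3
    have bound: "norm ((max t 0 powr \<nu> - max 0 0 powr \<nu>) / (t - 0)) \<le> \<bar>t\<bar> powr (\<nu> - 1)"
      for t :: real
    proof (cases "t > 0")
      case True
      then have "t powr \<nu> / t = t powr (\<nu> - 1)"
        by (simp add: powr_diff)
      then show ?thesis
        using True by simp
    qed (use assms in simp)
    have "((\<lambda>t. \<bar>t\<bar> powr (\<nu> - 1)) \<longlongrightarrow> 0) (at 0)"
      by (rule tendsto_zero_powrI) (auto intro!: tendsto_eq_intros simp: assms)
    from Lim_null_comparison[OF always_eventually[OF allI[OF bound]] this]
    show ?thesis
      using 3 assms by (simp add: has_field_derivative_iff)
  qed
qed

lemma has_real_derivative_abs_powr:
  fixes \<nu> s :: real
  assumes "1 < \<nu>"
  shows "((\<lambda>t. \<bar>t\<bar> powr \<nu>) has_real_derivative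
           \<nu> * (max s 0 powr (\<nu> - 1) - max (- s) 0 powr (\<nu> - 1))) (at s)"
proof -
  have "\<bar>t\<bar> powr \<nu> = max t 0 powr \<nu> + max (- t) 0 powr \<nu>" for t :: real
    by (cases "t \<ge> 0") auto
  moreover have "((\<lambda>t. max t 0 powr \<nu> + max (- t) 0 powr \<nu>) has_real_derivative
      \<nu> * max s 0 powr (\<nu> - 1) + \<nu> * max (- s) 0 powr (\<nu> - 1) * - 1) (at s)"
    by (intro DERIV_add has_real_derivative_max_0_powr[OF assms]
        DERIV_chain2[OF has_real_derivative_max_0_powr[OF assms]] derivative_eq_intros) auto
  ultimately show ?thesis
    by (simp add: algebra_simps)
qed

lemma mvt_segment_GDERIV:
  fixes F :: "'a::real_inner \<Rightarrow> real"
  assumes "\<And>z. z \<in> closed_segment x y \<Longrightarrow> GDERIV F z :> D z"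
  shows "\<exists>z\<in>closed_segment x y. F y - F x = D z \<bullet> (y - x)"
proof -
  define \<gamma> where "\<gamma> t = x + t *\<^sub>R (y - x)" for t :: real
  have seg: "\<gamma> t \<in> closed_segment x y" if "t \<in> {0..1}" for t
    using that unfolding \<gamma>_def in_segment by (intro exI[of _ t]) (auto simp: algebra_simps)
  have "((\<lambda>t. F (\<gamma> t)) has_derivative (\<lambda>s. (s *\<^sub>R (y - x)) \<bullet> D (\<gamma> t))) (at t within {0..1})"
    if "t \<in> {0..1}" for t
  proof (rule has_derivative_compose[of \<gamma>])
    show "(\<gamma> has_derivative (\<lambda>s. s *\<^sub>R (y - x))) (at t within {0..1})"
      unfolding \<gamma>_def by (auto intro!: derivative_eq_intros)
    show "(F has_derivative (\<lambda>h. h \<bullet> D (\<gamma> t))) (at (\<gamma> t))"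
      using assms[OF seg[OF that]] unfolding gderiv_def .
  qed
  from mvt_very_simple[OF zero_le_one this]
  obtain t where t: "t \<in> {0..1}" "F (\<gamma> 1) - F (\<gamma> 0) = (y - x) \<bullet> D (\<gamma> t)"
    by auto
  moreover have "\<gamma> 1 = y" "\<gamma> 0 = x"
    by (simp_all add: \<gamma>_def)
  ultimately show ?thesis
    using seg[OF t(1)] by (intro bexI[of _ "\<gamma> t"]) (simp_all add: inner_commute)
qed

lemma C1_on_lipschitz_on_cball:
  fixes F :: "'i \<Rightarrow> 'a::euclidean_space \<Rightarrow> real"
  assumes "finite I" "open U" "x \<in> U" "\<And>i. i \<in> I \<Longrightarrow> C1_on U (F i)"
  obtains \<delta> L where "\<delta> > 0" "cball x \<delta> \<subseteq> U" "\<And>i. i \<in> I \<Longrightarrow> L-lipschitz_on (cball x \<delta>) (F i)"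
proof -
  obtain \<delta> where \<delta>: "\<delta> > 0" "cball x \<delta> \<subseteq> U"
    using assms(2,3) open_contains_cball by blast
  let ?G = "\<lambda>y. \<Sum>i\<in>I. norm (grad (F i) y)"
  have "continuous_on (cball x \<delta>) ?G"
    using assms(4) \<delta>(2) unfolding C1_on_def
    by (intro continuous_intros) (auto intro: continuous_on_subset)
  then have "bounded (?G ` cball x \<delta>)"
    by (intro compact_imp_bounded compact_continuous_image compact_cball)
  then obtain L where "L > 0" and bnd: "\<forall>v\<in>?G ` cball x \<delta>. norm v \<le> L"
    unfolding bounded_pos by blast
  have L: "?G y \<le> L" if "y \<in> cball x \<delta>" for y
    using bnd[rule_format, OF imageI[OF that]] by simp
  have "L-lipschitz_on (cball x \<delta>) (F i)" if i: "i \<in> I" for i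
  proof (rule lipschitz_onI)
    show "dist (F i y) (F i z) \<le> L * dist y z" if "y \<in> cball x \<delta>" "z \<in> cball x \<delta>" for y z
      unfolding dist_norm
    proof (rule differentiable_bound[OF convex_cball _ _ that])
      fix w assume w: "w \<in> cball x \<delta>"
      then have "GDERIV (F i) w :> grad (F i) w"
        using grad_GDERIV assms(4)[OF i] \<delta>(2) unfolding C1_on_def by blast
      then show "(F i has_derivative (\<lambda>h. h \<bullet> grad (F i) w)) (at w within cball x \<delta>)"
        unfolding gderiv_def by (rule has_derivative_at_withinI)
      have "norm (grad (F i) w) \<le> L"
        using member_le_sum[OF i, of "\<lambda>i. norm (grad (F i) w)"] L[OF w] assms(1) by simp
      then show "onorm (\<lambda>h. h \<bullet> grad (F i) w) \<le> L"
        by (intro onorm_le) (metis Cauchy_Schwarz_ineq2 real_norm_def mult.commute mult_left_mono norm_ge_zero order_trans)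
    qed
  qed (use \<open>L > 0\<close> in simp)
  then show ?thesis
    using that \<delta> by blast
qed

section \<open>Elementary inequalities\<close>

lemma powr_add_le:
  fixes a b \<gamma> :: real
  assumes "0 \<le> a" "0 \<le> b" "0 < \<gamma>" "\<gamma> \<le> 1"
  shows "(a + b) powr \<gamma> \<le> a powr \<gamma> + b powr \<gamma>"
proof (cases "a + b = 0")
  case False
  define s where "s = a + b"
  have s: "s > 0" using False assms s_def by simp
  have "1 = a / s + b / s"
    using s by (simp add: s_def add_divide_distrib[symmetric])
  also have "\<dots> \<le> (a / s) powr \<gamma> + (b / s) powr \<gamma>"
    using s assms powr_mono'[of \<gamma> 1] by (intro add_mono) (auto simp: s_def)
  also have "\<dots> = (a powr \<gamma> + b powr \<gamma>) / s powr \<gamma>"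
    using s assms by (simp add: powr_divide add_divide_distrib)
  finally show ?thesis
    using s by (simp add: le_divide_eq s_def)
qed (use assms in simp)

lemma abs_powr_diff_le:
  fixes a b \<gamma> :: real
  assumes "0 \<le> a" "0 \<le> b" "0 < \<gamma>" "\<gamma> \<le> 1"
  shows "\<bar>a powr \<gamma> - b powr \<gamma>\<bar> \<le> \<bar>a - b\<bar> powr \<gamma>"
proof -
  have *: "a powr \<gamma> - b powr \<gamma> \<le> \<bar>a - b\<bar> powr \<gamma>" if "0 \<le> a" "0 \<le> b" for a b :: real
  proof (cases "b \<le> a")
    case True
    then show ?thesis
      using powr_add_le[of b "a - b" \<gamma>] that assms by simp
  next
    case False
    then have "a powr \<gamma> \<le> b powr \<gamma>"
      using powr_mono2[of \<gamma> a b] that assms by simp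
    then show ?thesis
      using powr_ge_zero[of "\<bar>a - b\<bar>" \<gamma>] by linarith
  qed
  show ?thesis
    using *[of a b] *[of b a] abs_minus_commute[of a b] assms by (simp add: abs_le_iff)
qed

lemma max_0_powr_diff_le:
  fixes s t \<gamma> :: real
  assumes "0 < \<gamma>" "\<gamma> \<le> 1"
  shows "\<bar>max s 0 powr \<gamma> - max t 0 powr \<gamma>\<bar> \<le> \<bar>s - t\<bar> powr \<gamma>"
proof -
  have "\<bar>max s 0 powr \<gamma> - max t 0 powr \<gamma>\<bar> \<le> \<bar>max s 0 - max t 0\<bar> powr \<gamma>"
    using assms by (intro abs_powr_diff_le) auto
  also have "\<dots> \<le> \<bar>s - t\<bar> powr \<gamma>"
    by (rule powr_mono2) (use assms in auto)
  finally show ?thesis .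
qed

lemma scaled_max_0_powr_diff_le:
  fixes s t c \<rho> \<gamma> \<kappa> :: real
  assumes "0 < \<gamma>" "\<gamma> \<le> 1" "0 < \<rho>" "0 \<le> \<kappa>" "\<bar>s - t\<bar> \<le> c"
  shows "\<bar>\<kappa> * max s 0 powr \<gamma> / \<rho> powr \<gamma> - \<kappa> * max t 0 powr \<gamma> / \<rho> powr \<gamma>\<bar> \<le> \<kappa> * (c / \<rho>) powr \<gamma>"
proof -
  have "\<bar>\<kappa> * max s 0 powr \<gamma> / \<rho> powr \<gamma> - \<kappa> * max t 0 powr \<gamma> / \<rho> powr \<gamma>\<bar>
      = \<kappa> * \<bar>max s 0 powr \<gamma> - max t 0 powr \<gamma>\<bar> / \<rho> powr \<gamma>"
    using assms by (simp add: abs_mult diff_divide_distrib[symmetric] right_diff_distrib[symmetric])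
  also have "\<dots> \<le> \<kappa> * c powr \<gamma> / \<rho> powr \<gamma>"
  proof -
    have "\<bar>max s 0 powr \<gamma> - max t 0 powr \<gamma>\<bar> \<le> c powr \<gamma>"
      using max_0_powr_diff_le[of \<gamma> s t] powr_mono2[of \<gamma> "\<bar>s - t\<bar>" c] assms by simp
    then show ?thesis
      using assms by (intro divide_right_mono mult_left_mono) auto
  qed
  also have "\<dots> = \<kappa> * (c / \<rho>) powr \<gamma>"
    using assms by (simp add: powr_divide)
  finally show ?thesis .
qed

lemma inverse_neg_diff_le:
  fixes s t \<sigma> \<rho> :: real
  assumes "s \<le> - \<sigma>" "t \<le> - \<sigma>" "0 < \<sigma>" "0 \<le> \<rho>"
  shows "\<bar>\<rho> / - s - \<rho> / - t\<bar> \<le> \<rho> * \<bar>s - t\<bar> / \<sigma>\<^sup>2"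
proof -
  have "\<sigma>\<^sup>2 \<le> s * t"
    using assms mult_mono[of \<sigma> "- s" \<sigma> "- t"] by (simp add: power2_eq_square)
  moreover have "\<rho> / - s - \<rho> / - t = \<rho> * (s - t) / (s * t)"
    using assms by (simp add: field_simps)
  ultimately show ?thesis
    using assms by (simp add: abs_mult abs_divide frac_le mult_nonneg_nonneg)
qed

lemma finite_range_imp_constant_subseq:
  fixes S :: "nat \<Rightarrow> 'b"
  assumes "finite (range S)"
  obtains R :: "nat \<Rightarrow> nat" where "strict_mono R" "\<And>n. S (R n) = S (R 0)"
proof -
  obtain k where "infinite {n. S n = S k}"
    using pigeonhole_infinite[of UNIV S] assms by auto
  then obtain R :: "nat \<Rightarrow> nat" where "strict_mono R" "\<And>n. R n \<in> {n. S n = S k}"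
    using infinite_enumerate by blast
  then show ?thesis
    by (intro that[of R]) simp_all
qed

lemma bounded_imp_convergent_subseq_family:
  fixes c :: "nat \<Rightarrow> 'i \<Rightarrow> real"
  assumes "finite I" "\<And>i. i \<in> I \<Longrightarrow> bounded (range (\<lambda>n. c n i))"
  obtains R :: "nat \<Rightarrow> nat" and l where "strict_mono R" "\<And>i. i \<in> I \<Longrightarrow> (\<lambda>n. c (R n) i) \<longlonglongrightarrow> l i"
proof -
  obtain l R where R: "strict_mono R"
    and conv: "\<forall>e>0. \<forall>\<^sub>F n in sequentially. \<forall>i\<in>I. dist (c (R n) i) (l i) < e"
    using compact_lemma_general[of I "\<lambda>x i. x i" c id] assms by (auto simp: image_image)
  have "(\<lambda>n. c (R n) i) \<longlonglongrightarrow> l i" if "i \<in> I" for i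
    using conv that by (auto simp: tendsto_iff elim!: eventually_mono)
  then show ?thesis
    using that R by blast
qed

section \<open>Polyhedral sets and multipliers\<close>

lemma polyX_diff_in_tangent_X:
  assumes "x \<in> polyX A b q" "y \<in> polyX A b q"
  shows "y - x \<in> tangent_X A b q x"
  using assms by (auto simp: polyX_def tangent_X_def active_set_def inner_diff_right)

lemma add_scaleR_in_polyX:
  assumes x: "x \<in> polyX A b q" and d: "d \<in> eps_tangent_X A b q x \<epsilon>" "norm d \<le> 1"
    and t: "0 \<le> t" "\<And>i. i < q \<Longrightarrow> t * norm (A i) \<le> \<epsilon>"
  shows "x + t *\<^sub>R d \<in> polyX A b q"
  unfolding polyX_def
proof (intro CollectI allI impI)
  fix i assume i: "i < q"
  show "A i \<bullet> (x + t *\<^sub>R d) \<le> b i"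
  proof (cases "i \<in> eps_active_set A b q x \<epsilon>")
    case True
    then have "A i \<bullet> d \<le> 0"
      using d unfolding eps_tangent_X_def by blast
    then have "t * (A i \<bullet> d) \<le> 0"
      using t(1) by (rule mult_nonneg_nonpos[rotated])
    moreover have "A i \<bullet> x \<le> b i"
      using x i by (simp add: polyX_def)
    ultimately show ?thesis
      by (simp add: inner_add_right)
  next
    case False
    have "t * (A i \<bullet> d) \<le> t * (norm (A i) * norm d)"
      using t(1) norm_cauchy_schwarz[of "A i" d] by (rule mult_left_mono[rotated])
    also have "\<dots> \<le> \<epsilon>"
      using t(1) d(2) t(2)[OF i] mult_left_mono[of "norm d" 1 "t * norm (A i)"] by simp
    finally show ?thesis
      using False i by (simp add: eps_active_set_def inner_add_right)
  qed
qed

lemma eventually_eps_active_set_eq: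
  assumes lim: "x \<longlonglongrightarrow> x0" and x0: "x0 \<in> polyX A b q"
  obtains \<epsilon>0 where "\<epsilon>0 > 0"
    "\<And>\<epsilon>. 0 < \<epsilon> \<Longrightarrow> \<epsilon> \<le> \<epsilon>0 \<Longrightarrow>
       \<forall>\<^sub>F k in sequentially. eps_active_set A b q (x k) \<epsilon> = active_set A b q x0"
proof -
  define gaps where "gaps = {b i - A i \<bullet> x0 | i. i < q \<and> A i \<bullet> x0 < b i}"
  define \<epsilon>0 where "\<epsilon>0 = Min (insert 1 gaps) / 2"
  have "finite gaps" "\<forall>g\<in>gaps. g > 0"
    unfolding gaps_def by auto
  then have \<epsilon>0: "\<epsilon>0 > 0" "\<And>i. i < q \<Longrightarrow> A i \<bullet> x0 < b i \<Longrightarrow> 2 * \<epsilon>0 \<le> b i - A i \<bullet> x0"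
    unfolding \<epsilon>0_def by (auto intro!: Min_le simp: gaps_def)
  have "\<forall>\<^sub>F k in sequentially. eps_active_set A b q (x k) \<epsilon> = active_set A b q x0"
    if \<epsilon>: "0 < \<epsilon>" "\<epsilon> \<le> \<epsilon>0" for \<epsilon>
  proof -
    have "\<forall>\<^sub>F k in sequentially. \<forall>i\<in>{..<q}. (b i - \<epsilon> \<le> A i \<bullet> x k \<longleftrightarrow> A i \<bullet> x0 = b i)"
    proof (rule eventually_ball_finite[OF finite_lessThan], rule ballI)
      fix i assume "i \<in> {..<q}"
      then have i: "i < q" "A i \<bullet> x0 \<le> b i"
        using x0 by (auto simp: polyX_def)
      have lim_i: "(\<lambda>k. A i \<bullet> x k) \<longlonglongrightarrow> A i \<bullet> x0"
        by (intro tendsto_inner tendsto_const lim)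
      show "\<forall>\<^sub>F k in sequentially. (b i - \<epsilon> \<le> A i \<bullet> x k \<longleftrightarrow> A i \<bullet> x0 = b i)"
      proof (cases "A i \<bullet> x0 = b i")
        case True
        then show ?thesis
          using order_tendstoD(1)[OF lim_i, of "b i - \<epsilon>"] \<epsilon> by (auto elim: eventually_mono)
      next
        case False
        then have "A i \<bullet> x0 < b i - \<epsilon>"
          using i \<epsilon> \<epsilon>0(2)[of i] by linarith
        then have "\<forall>\<^sub>F k in sequentially. A i \<bullet> x k < b i - \<epsilon>"
          by (rule order_tendstoD(2)[OF lim_i])
        then show ?thesis
          using False by (auto elim: eventually_mono)
      qed
    qed
    then show ?thesis
      by eventually_elim (auto simp: eps_active_set_def active_set_def)
  qed
  then show ?thesis
    using that \<epsilon>0(1) by blast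
qed

lemma pos_span_inner_nonneg:
  assumes "t \<in> pos_span S" "\<And>d. d \<in> S \<Longrightarrow> 0 \<le> w \<bullet> d"
  shows "0 \<le> w \<bullet> t"
proof -
  obtain c where "\<forall>d\<in>S. 0 \<le> c d" "t = (\<Sum>d\<in>S. c d *\<^sub>R d)"
    using assms(1) unfolding pos_span_def by blast
  then show ?thesis
    using assms(2) by (simp add: inner_sum_right sum_nonneg)
qed

definition lagrangian_grad ::
  "('a::euclidean_space \<Rightarrow> real) \<Rightarrow> (nat \<Rightarrow> 'a \<Rightarrow> real) \<Rightarrow> (nat \<Rightarrow> 'a \<Rightarrow> real) \<Rightarrow> nat \<Rightarrow> nat \<Rightarrow>
   'a \<Rightarrow> real \<Rightarrow> (nat \<Rightarrow> real) \<Rightarrow> (nat \<Rightarrow> real) \<Rightarrow> 'a" where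
  "lagrangian_grad f g h m p x \<tau> lam mu =
     \<tau> *\<^sub>R grad f x + (\<Sum>l<m. lam l *\<^sub>R grad (g l) x) + (\<Sum>j<p. mu j *\<^sub>R grad (h j) x)"

lemma MFCQ_imp_normal_multipliers:
  assumes mfcq: "MFCQ g h m p A b q x"
    and lam_nonneg: "\<And>l. l < m \<Longrightarrow> 0 \<le> lam l"
    and lam_inactive: "\<And>l. l < m \<Longrightarrow> g l x < 0 \<Longrightarrow> lam l = 0"
    and tangent: "\<And>t. t \<in> tangent_X A b q x \<Longrightarrow> 0 \<le> lagrangian_grad f g h m p x 0 lam mu \<bullet> t"
  shows "\<forall>l<m. lam l = 0" and "\<forall>j<p. mu j = 0"
proof -
  let ?w = "lagrangian_grad f g h m p x 0 lam mu"
  obtain d where d: "d \<in> tangent_X A b q x"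
    and g_descent: "\<And>l. l < m \<Longrightarrow> g l x \<ge> 0 \<Longrightarrow> grad (g l) x \<bullet> d < 0"
    and h_tangent: "\<And>j. j < p \<Longrightarrow> grad (h j) x \<bullet> d = 0"
    using mfcq unfolding MFCQ_def by blast
  have terms_nonpos: "lam l * (grad (g l) x \<bullet> d) \<le> 0" if "l < m" for l
    using g_descent[OF that] lam_nonneg[OF that] lam_inactive[OF that]
    by (cases "g l x < 0") (auto intro: mult_nonneg_nonpos)
  have "?w \<bullet> d = (\<Sum>l<m. lam l * (grad (g l) x \<bullet> d))"
    using h_tangent by (simp add: lagrangian_grad_def inner_add_left inner_sum_left)
  moreover have "(\<Sum>l<m. lam l * (grad (g l) x \<bullet> d)) \<le> 0"
    by (rule sum_nonpos) (simp add: terms_nonpos)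
  ultimately have "(\<Sum>l<m. - (lam l * (grad (g l) x \<bullet> d))) = 0"
    using tangent[OF d] by (simp add: sum_negf)
  then have "\<forall>l\<in>{..<m}. - (lam l * (grad (g l) x \<bullet> d)) = 0"
    by (subst (asm) sum_nonneg_eq_0_iff) (auto simp: terms_nonpos)
  then have "lam l * (grad (g l) x \<bullet> d) = 0" if "l < m" for l
    using that by simp
  then show lam_zero: "\<forall>l<m. lam l = 0"
    using g_descent lam_inactive by (metis mult_eq_0_iff not_le order_less_irrefl)
  have "\<forall>t\<in>tangent_X A b q x. 0 \<le> (\<Sum>j<p. mu j *\<^sub>R grad (h j) x) \<bullet> t"
    using tangent lam_zero by (simp add: lagrangian_grad_def)
  then show "\<forall>j<p. mu j = 0"
    using mfcq unfolding MFCQ_def by blast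
qed

lemma lagrangian_grad_scale:
  "lagrangian_grad f g h m p x (c * \<tau>) (\<lambda>l. c * lam l) (\<lambda>j. c * mu j)
     = c *\<^sub>R lagrangian_grad f g h m p x \<tau> lam mu"
  by (simp add: lagrangian_grad_def scaleR_add_right scaleR_sum_right)

lemma MFCQ_imp_pos_objective_multiplier:
  assumes mfcq: "MFCQ g h m p A b q x"
    and \<tau>: "0 \<le> \<tau>" "\<tau> + (\<Sum>l<m. lam l) + (\<Sum>j<p. \<bar>mu j\<bar>) = 1"
    and lam_nonneg: "\<And>l. l < m \<Longrightarrow> 0 \<le> lam l"
    and lam_inactive: "\<And>l. l < m \<Longrightarrow> g l x < 0 \<Longrightarrow> lam l = 0"
    and tangent: "\<And>t. t \<in> tangent_X A b q x \<Longrightarrow> 0 \<le> lagrangian_grad f g h m p x \<tau> lam mu \<bullet> t"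
  shows "0 < \<tau>"
proof (rule ccontr)
  assume "\<not> 0 < \<tau>"
  then have "\<tau> = 0"
    using \<tau>(1) by simp
  then have "0 \<le> lagrangian_grad f g h m p x 0 lam mu \<bullet> t" if "t \<in> tangent_X A b q x" for t
    using tangent[OF that] by simp
  then have "\<forall>l<m. lam l = 0" "\<forall>j<p. mu j = 0"
    using lam_nonneg lam_inactive by (intro MFCQ_imp_normal_multipliers[OF mfcq]; blast)+
  then show False
    using \<tau>(2) \<open>\<tau> = 0\<close> by simp
qed

lemma fritz_john_imp_stationary_point:
  assumes feasible: "x \<in> feasible_set g h m p A b q" and "0 < \<tau>"
    and lam_nonneg: "\<And>l. l < m \<Longrightarrow> 0 \<le> lam l"
    and lam_inactive: "\<And>l. l < m \<Longrightarrow> g l x < 0 \<Longrightarrow> lam l = 0"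
    and tangent: "\<And>t. t \<in> tangent_X A b q x \<Longrightarrow> 0 \<le> lagrangian_grad f g h m p x \<tau> lam mu \<bullet> t"
  shows "stationary_point f g h m p A b q x"
proof -
  have grad_eq: "grad f x + (\<Sum>l<m. (lam l / \<tau>) *\<^sub>R grad (g l) x) + (\<Sum>j<p. (mu j / \<tau>) *\<^sub>R grad (h j) x)
      = (1 / \<tau>) *\<^sub>R lagrangian_grad f g h m p x \<tau> lam mu"
    using lagrangian_grad_scale[of f g h m p x "1 / \<tau>" \<tau> lam mu] \<open>0 < \<tau>\<close>
    by (simp add: lagrangian_grad_def)
  show ?thesis
    unfolding stationary_point_def
  proof (intro conjI exI)
    show "x \<in> feasible_set g h m p A b q"
      by (fact feasible)
    show "\<forall>y\<in>polyX A b q. 0 \<le> (grad f x + (\<Sum>l<m. (lam l / \<tau>) *\<^sub>R grad (g l) x)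
        + (\<Sum>j<p. (mu j / \<tau>) *\<^sub>R grad (h j) x)) \<bullet> (y - x)"
      using grad_eq feasible tangent[OF polyX_diff_in_tangent_X] \<open>0 < \<tau>\<close> by (simp add: feasible_set_def)
    show "(\<Sum>l<m. lam l / \<tau> * g l x) = 0"
      using feasible lam_inactive by (intro sum.neutral) (force simp: feasible_set_def)
    show "\<forall>l<m. 0 \<le> lam l / \<tau>"
      using lam_nonneg \<open>0 < \<tau>\<close> by simp
  qed
qed

section \<open>Iterates of LOG-DS\<close>

locale logds =
  fixes f :: "'a::euclidean_space \<Rightarrow> real"
    and g h :: "nat \<Rightarrow> 'a \<Rightarrow> real"
    and m p q :: nat
    and A :: "nat \<Rightarrow> 'a" and b :: "nat \<Rightarrow> real"
    and \<nu> \<theta>\<alpha> \<theta>\<rho> \<phi> \<beta> :: real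
    and \<xi> :: "real \<Rightarrow> real"
    and xs :: "nat \<Rightarrow> 'a" and \<alpha>s \<rho>s :: "nat \<Rightarrow> real" and Ds :: "nat \<Rightarrow> 'a set"
    and U :: "'a set"
  assumes open_U: "open U" and polyX_subset_U: "polyX A b q \<subseteq> U"
    and C1_f: "C1_on U f" and C1_g: "\<And>l. l < m \<Longrightarrow> C1_on U (g l)"
    and C1_h: "\<And>j. j < p \<Longrightarrow> C1_on U (h j)"
    and x0X: "xs 0 \<in> polyX A b q"
    and x0int: "\<forall>l\<in>Glog g m (xs 0). g l (xs 0) < 0"
    and alpha0: "\<alpha>s 0 > 0" and rho0: "\<rho>s 0 > 0"
    and nu: "1 < \<nu>" "\<nu> \<le> 2"
    and theta_alpha: "0 < \<theta>\<alpha>" "\<theta>\<alpha> < 1"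
    and theta_rho: "0 < \<theta>\<rho>" "\<theta>\<rho> < 1"
    and phi: "\<phi> \<ge> 1" and beta: "\<beta> > 1"
    and forcing: "forcing_function \<xi>"
    and iter: "\<forall>k. logds_step f g h m p A b q \<nu> \<theta>\<alpha> \<theta>\<rho> \<phi> \<beta> \<xi> xs \<alpha>s \<rho>s Ds k"
    and poll: "poll_direction_assumption A b q xs Ds"
begin

abbreviation "GL \<equiv> Glog g m (xs 0)"
abbreviation "GE \<equiv> Gext g m (xs 0)"

definition in_domain :: "'a \<Rightarrow> bool" where
  "in_domain x \<longleftrightarrow> x \<in> polyX A b q \<and> (\<forall>l\<in>GL. g l x < 0)"

text \<open>The multiplier estimates \<open>\<lambda>\<^sub>l(x; \<rho>)\<close> and \<open>\<mu>\<^sub>j(x; \<rho>)\<close>, written as functions of the constraint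
  value \<open>t = g\<^sub>l(x)\<close> resp. \<open>t = h\<^sub>j(x)\<close>: they are the derivatives of the barrier and penalty terms.\<close>

definition lam_est :: "real \<Rightarrow> nat \<Rightarrow> real \<Rightarrow> real" where
  "lam_est \<rho> l t = (if l \<in> GL then \<rho> / - t else \<nu> * max t 0 powr (\<nu> - 1) / \<rho> powr (\<nu> - 1))"

definition mu_est :: "real \<Rightarrow> real \<Rightarrow> real" where
  "mu_est \<rho> t = \<nu> * (max t 0 powr (\<nu> - 1) - max (- t) 0 powr (\<nu> - 1)) / \<rho> powr (\<nu> - 1)"

definition penalty :: "real \<Rightarrow> nat \<Rightarrow> real \<Rightarrow> real" where
  "penalty \<rho> l t = (if l \<in> GL then - \<rho> * ln (- t) else max t 0 powr \<nu> / \<rho> powr (\<nu> - 1))"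

definition merit :: "real \<Rightarrow> 'a \<Rightarrow> real" where
  "merit \<rho> x = f x + (\<Sum>l<m. penalty \<rho> l (g l x)) + (\<Sum>j<p. \<bar>h j x\<bar> powr \<nu> / \<rho> powr (\<nu> - 1))"

definition merit_grad :: "real \<Rightarrow> 'a \<Rightarrow> 'a" where
  "merit_grad \<rho> y = lagrangian_grad f g h m p y 1 (\<lambda>l. lam_est \<rho> l (g l y)) (\<lambda>j. mu_est \<rho> (h j y))"

lemma meritZ_eq:
  "meritZ f g h m p A b q (xs 0) \<nu> \<rho> x = (if in_domain x then ereal (merit \<rho> x) else \<infinity>)"
proof -
  have "{..<m} = GL \<union> GE" "GL \<inter> GE = {}" "finite GL" "finite GE"
    "\<And>l. l \<in> GE \<Longrightarrow> l \<notin> GL"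
    by (auto simp: Glog_def Gext_def)
  then have "(\<Sum>l<m. penalty \<rho> l (g l x)) = (\<Sum>l\<in>GL. - \<rho> * ln (- g l x))
      + (\<Sum>l\<in>GE. max (g l x) 0 powr \<nu> / \<rho> powr (\<nu> - 1))"
    by (simp add: sum.union_disjoint penalty_def cong: sum.cong)
  then show ?thesis
    unfolding meritZ_def merit_def in_domain_def
    by (simp add: sum_distrib_left sum_divide_distrib[symmetric] sum_negf)
qed

lemma iterate_props: "in_domain (xs k) \<and> 0 < \<alpha>s k \<and> 0 < \<rho>s k"
proof (induction k)
  case 0
  then show ?case
    using x0X x0int alpha0 rho0 by (simp add: in_domain_def)
next
  case (Suc k)
  then show ?case
    using iter[rule_format, of k] phi theta_alpha theta_rho
    unfolding logds_step_def Let_def meritZ_eq by (auto split: if_splits)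
qed

lemma in_domain_iterate: "in_domain (xs k)"
  and alpha_pos: "0 < \<alpha>s k"
  and rho_pos: "0 < \<rho>s k"
  using iterate_props by auto

lemma rho_Suc_le: "\<rho>s (Suc k) \<le> \<rho>s k"
  using iter[rule_format, of k] rho_pos[of k] theta_rho
  unfolding logds_step_def Let_def by (auto split: if_splits)

lemma rho_antimono: "k \<le> n \<Longrightarrow> \<rho>s n \<le> \<rho>s k"
  by (induction n rule: dec_induct) (auto intro: order_trans rho_Suc_le)

lemma rho_decrease_step:
  assumes "\<rho>s (Suc k) < \<rho>s k"
  shows "\<rho>s (Suc k) = \<theta>\<rho> * \<rho>s k"
    and "\<theta>\<alpha> * \<alpha>s k \<le> \<rho>s k powr \<beta>"
    and "\<And>l. l \<in> GL \<Longrightarrow> \<theta>\<alpha> * \<alpha>s k \<le> (g l (xs k))\<^sup>2"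
    and "\<And>d. d \<in> Ds k \<Longrightarrow> in_domain (xs k + \<alpha>s k *\<^sub>R d) \<Longrightarrow>
           merit (\<rho>s k) (xs k) - \<xi> (\<alpha>s k) < merit (\<rho>s k) (xs k + \<alpha>s k *\<^sub>R d)"
proof -
  let ?gmin = "Min ((\<lambda>l. \<bar>g l (xs k)\<bar>) ` GL)"
  have poll_fails: "\<not> (\<exists>d\<in>Ds k. xs k + \<alpha>s k *\<^sub>R d \<in> polyX A b q \<and>
      meritZ f g h m p A b q (xs 0) \<nu> (\<rho>s k) (xs k + \<alpha>s k *\<^sub>R d)
        \<le> meritZ f g h m p A b q (xs 0) \<nu> (\<rho>s k) (xs k) - ereal (\<xi> (\<alpha>s k)))"
    and update: "\<theta>\<alpha> * \<alpha>s k \<le> min (\<rho>s k powr \<beta>) (?gmin\<^sup>2)" "\<rho>s (Suc k) = \<theta>\<rho> * \<rho>s k"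
    using iter[rule_format, of k] assms unfolding logds_step_def Let_def
    by (auto split: if_splits)
  show "\<rho>s (Suc k) = \<theta>\<rho> * \<rho>s k" "\<theta>\<alpha> * \<alpha>s k \<le> \<rho>s k powr \<beta>"
    using update by auto
  show "\<theta>\<alpha> * \<alpha>s k \<le> (g l (xs k))\<^sup>2" if "l \<in> GL" for l
  proof -
    have "finite GL"
      unfolding Glog_def by simp
    then have "0 \<le> ?gmin" "?gmin \<le> \<bar>g l (xs k)\<bar>"
      using that by (auto intro: Min_le) (subst Min_ge_iff; auto)
    then have "?gmin\<^sup>2 \<le> (g l (xs k))\<^sup>2"
      using power_mono[of ?gmin "\<bar>g l (xs k)\<bar>" 2] by simp
    then show ?thesis
      using update(1) by linarith
  qed
  show "merit (\<rho>s k) (xs k) - \<xi> (\<alpha>s k) < merit (\<rho>s k) (xs k + \<alpha>s k *\<^sub>R d)"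
    if "d \<in> Ds k" "in_domain (xs k + \<alpha>s k *\<^sub>R d)" for d
    using poll_fails that in_domain_iterate[of k] by (auto simp: meritZ_eq in_domain_def)
qed

lemma lam_est_nonneg:
  assumes "0 < \<rho>" "l \<in> GL \<Longrightarrow> t < 0"
  shows "0 \<le> lam_est \<rho> l t"
  using assms nu by (auto simp: lam_est_def divide_nonneg_neg)

lemma has_real_derivative_penalty:
  assumes "l \<in> GL \<Longrightarrow> t < 0"
  shows "(penalty \<rho> l has_real_derivative lam_est \<rho> l t) (at t)"
proof (cases "l \<in> GL")
  case True
  have "((\<lambda>t. - \<rho> * ln (- t)) has_real_derivative \<rho> / - t) (at t)"
    using assms[OF True] by (auto intro!: derivative_eq_intros simp: divide_simps)
  then show ?thesis
    using True by (simp add: penalty_def[abs_def] lam_est_def)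
next
  case False
  from DERIV_cdivide[OF has_real_derivative_max_0_powr[OF nu(1)], of "\<rho> powr (\<nu> - 1)"]
  show ?thesis
    using False by (simp add: penalty_def[abs_def] lam_est_def)
qed

lemma has_real_derivative_abs_powr_penalty:
  "((\<lambda>t. \<bar>t\<bar> powr \<nu> / \<rho> powr (\<nu> - 1)) has_real_derivative mu_est \<rho> t) (at t)"
  using DERIV_cdivide[OF has_real_derivative_abs_powr[OF nu(1)]] by (simp add: mu_est_def)

lemma merit_GDERIV:
  assumes y: "y \<in> U" and neg: "\<forall>l\<in>GL. g l y < 0"
  shows "GDERIV (merit \<rho>) y :> merit_grad \<rho> y"
proof -
  have "GDERIV f y :> grad f y"
    using C1_f y by (auto simp: C1_on_def intro: grad_GDERIV)
  moreover have "GDERIV (\<lambda>x. penalty \<rho> l (g l x)) y :> lam_est \<rho> l (g l y) *\<^sub>R grad (g l) y"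
    if "l < m" for l
    using C1_g[OF that] y neg
    by (intro GDERIV_DERIV_compose grad_GDERIV has_real_derivative_penalty) (auto simp: C1_on_def)
  moreover have "GDERIV (\<lambda>x. \<bar>h j x\<bar> powr \<nu> / \<rho> powr (\<nu> - 1)) y :> mu_est \<rho> (h j y) *\<^sub>R grad (h j) y"
    if "j < p" for j
    using C1_h[OF that] y
    by (intro GDERIV_DERIV_compose grad_GDERIV has_real_derivative_abs_powr_penalty) (auto simp: C1_on_def)
  ultimately show ?thesis
    unfolding merit_def[abs_def] merit_grad_def lagrangian_grad_def scaleR_one
    by (intro GDERIV_add GDERIV_sum) auto
qed

lemma poll_step_mvt:
  assumes K: "\<rho>s (Suc k) < \<rho>s k" and d: "d \<in> Ds k" "norm d = 1"
    and feasible: "xs k + \<alpha>s k *\<^sub>R d \<in> polyX A b q"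
    and nbhd: "\<And>w. w \<in> cball (xs k) (\<alpha>s k) \<Longrightarrow> w \<in> U \<and> (\<forall>l\<in>GL. g l w < 0)"
  shows "\<exists>u\<in>cball (xs k) (\<alpha>s k). - \<xi> (\<alpha>s k) / \<alpha>s k < merit_grad (\<rho>s k) u \<bullet> d"
proof -
  let ?x = "xs k" and ?y = "xs k + \<alpha>s k *\<^sub>R d"
  have "?y \<in> cball ?x (\<alpha>s k)"
    using d alpha_pos[of k] by (simp add: dist_norm)
  then have seg: "closed_segment ?x ?y \<subseteq> cball ?x (\<alpha>s k)"
    using alpha_pos[of k] by (intro closed_segment_subset convex_cball) auto
  have "GDERIV (merit (\<rho>s k)) z :> merit_grad (\<rho>s k) z" if "z \<in> closed_segment ?x ?y" for z
    using nbhd[OF subsetD[OF seg that]] by (intro merit_GDERIV) auto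
  from mvt_segment_GDERIV[OF this] obtain u where u: "u \<in> closed_segment ?x ?y"
    and mvt: "merit (\<rho>s k) ?y - merit (\<rho>s k) ?x = merit_grad (\<rho>s k) u \<bullet> (?y - ?x)"
    by blast
  have "in_domain ?y"
    using feasible nbhd \<open>?y \<in> cball ?x (\<alpha>s k)\<close> by (simp add: in_domain_def)
  then have "- \<xi> (\<alpha>s k) < merit_grad (\<rho>s k) u \<bullet> d * \<alpha>s k"
    using rho_decrease_step(4)[OF K d(1)] mvt by (simp add: mult.commute)
  then have "- \<xi> (\<alpha>s k) / \<alpha>s k < merit_grad (\<rho>s k) u \<bullet> d"
    using alpha_pos[of k] by (simp add: field_simps)
  then show ?thesis
    using u seg by blast
qed

end

section \<open>Limit points along iterations that decrease the penalty parameter\<close>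

locale logds_limit = logds +
  fixes xstar :: 'a and r :: "nat \<Rightarrow> nat"
  assumes r_strict_mono: "strict_mono r"
    and r_rho_decrease: "\<And>j. \<rho>s (Suc (r j)) < \<rho>s (r j)"
    and r_limit: "(\<lambda>j. xs (r j)) \<longlonglongrightarrow> xstar"
begin

lemma rho_r_le_power: "\<rho>s (r j) \<le> \<theta>\<rho> ^ j * \<rho>s (r 0)"
proof (induction j)
  case (Suc j)
  have "\<rho>s (r (Suc j)) \<le> \<rho>s (Suc (r j))"
    using r_strict_mono by (intro rho_antimono) (simp add: Suc_leI strict_monoD)
  also have "\<dots> = \<theta>\<rho> * \<rho>s (r j)"
    using rho_decrease_step(1)[OF r_rho_decrease] .
  also have "\<dots> \<le> \<theta>\<rho> ^ Suc j * \<rho>s (r 0)"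
    using Suc theta_rho by simp
  finally show ?case .
qed simp

lemma rho_r_tendsto_0: "(\<lambda>j. \<rho>s (r j)) \<longlonglongrightarrow> 0"
proof (rule Lim_null_comparison)
  show "\<forall>\<^sub>F j in sequentially. norm (\<rho>s (r j)) \<le> \<theta>\<rho> ^ j * \<rho>s (r 0)"
    using rho_r_le_power rho_pos by (intro always_eventually) (simp add: less_imp_le)
  show "(\<lambda>j. \<theta>\<rho> ^ j * \<rho>s (r 0)) \<longlonglongrightarrow> 0"
    using theta_rho by (intro tendsto_mult_left_zero LIMSEQ_power_zero) auto
qed

lemma rho_r_powr_tendsto_0: "0 < e \<Longrightarrow> (\<lambda>j. \<rho>s (r j) powr e) \<longlonglongrightarrow> 0"
  using rho_pos by (intro tendsto_zero_powrI[OF rho_r_tendsto_0 tendsto_const])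
    (auto intro: always_eventually less_imp_le)

lemma alpha_rho_r_tendsto_0: "(\<lambda>j. \<alpha>s (r j) / \<rho>s (r j)) \<longlonglongrightarrow> 0"
proof (rule Lim_null_comparison)
  have "\<alpha>s (r j) / \<rho>s (r j) \<le> \<rho>s (r j) powr (\<beta> - 1) / \<theta>\<alpha>" for j
    using rho_decrease_step(2)[OF r_rho_decrease[of j]] rho_pos[of "r j"] theta_alpha
    by (simp add: powr_diff field_simps)
  then show "\<forall>\<^sub>F j in sequentially. norm (\<alpha>s (r j) / \<rho>s (r j)) \<le> \<rho>s (r j) powr (\<beta> - 1) / \<theta>\<alpha>"
    using alpha_pos rho_pos by (intro always_eventually) (simp add: less_imp_le)
  show "(\<lambda>j. \<rho>s (r j) powr (\<beta> - 1) / \<theta>\<alpha>) \<longlonglongrightarrow> 0"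
    using rho_r_powr_tendsto_0[of "\<beta> - 1"] beta by (simp add: tendsto_divide_zero)
qed

lemma alpha_r_tendsto_0: "(\<lambda>j. \<alpha>s (r j)) \<longlonglongrightarrow> 0"
proof -
  have "\<alpha>s (r j) = \<alpha>s (r j) / \<rho>s (r j) * \<rho>s (r j)" for j
    using rho_pos[of "r j"] by simp
  then show ?thesis
    using tendsto_mult[OF alpha_rho_r_tendsto_0 rho_r_tendsto_0] by simp
qed

lemma xstar_in_polyX: "xstar \<in> polyX A b q"
  unfolding polyX_def
proof (intro CollectI allI impI)
  fix i assume "i < q"
  then have "A i \<bullet> xs (r j) \<le> b i" for j
    using in_domain_iterate[of "r j"] by (simp add: in_domain_def polyX_def)
  then show "A i \<bullet> xstar \<le> b i"
    by (intro LIMSEQ_le_const2[OF tendsto_inner[OF tendsto_const r_limit]]) auto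
qed

lemma xstar_in_U: "xstar \<in> U"
  using xstar_in_polyX polyX_subset_U by blast

lemma eventually_poll_cone:
  "\<forall>\<^sub>F j in sequentially. pos_span (Ds (r j) \<inter> tangent_X A b q xstar) = tangent_X A b q xstar \<and>
     (\<forall>d\<in>tangent_X A b q xstar. norm d \<le> 1 \<longrightarrow> xs (r j) + \<alpha>s (r j) *\<^sub>R d \<in> polyX A b q)"
proof -
  obtain \<epsilon>bar where \<epsilon>bar: "0 < \<epsilon>bar" "\<And>k \<epsilon>. 0 < \<epsilon> \<Longrightarrow> \<epsilon> \<le> \<epsilon>bar \<Longrightarrow>
      pos_span (Ds k \<inter> eps_tangent_X A b q (xs k) \<epsilon>) = eps_tangent_X A b q (xs k) \<epsilon>"
    using poll unfolding poll_direction_assumption_def by blast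
  obtain \<epsilon>0 where \<epsilon>0: "0 < \<epsilon>0" "\<And>\<epsilon>. 0 < \<epsilon> \<Longrightarrow> \<epsilon> \<le> \<epsilon>0 \<Longrightarrow>
      \<forall>\<^sub>F j in sequentially. eps_active_set A b q (xs (r j)) \<epsilon> = active_set A b q xstar"
    using eventually_eps_active_set_eq[OF r_limit xstar_in_polyX] by blast
  define \<epsilon> where "\<epsilon> = min \<epsilon>bar \<epsilon>0"
  have \<epsilon>: "0 < \<epsilon>" "\<epsilon> \<le> \<epsilon>bar" "\<epsilon> \<le> \<epsilon>0"
    using \<epsilon>bar(1) \<epsilon>0(1) by (auto simp: \<epsilon>_def)
  have "\<forall>\<^sub>F j in sequentially. \<alpha>s (r j) * (1 + (\<Sum>i<q. norm (A i))) < \<epsilon>"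
    using tendsto_mult_left_zero[OF alpha_r_tendsto_0] \<epsilon>(1) by (rule order_tendstoD(2))
  moreover have "\<forall>\<^sub>F j in sequentially. eps_tangent_X A b q (xs (r j)) \<epsilon> = tangent_X A b q xstar"
    using \<epsilon>0(2)[OF \<epsilon>(1,3)] by eventually_elim (simp add: eps_tangent_X_def tangent_X_def)
  ultimately show ?thesis
  proof eventually_elim
    case (elim j)
    have \<alpha>_norm: "\<alpha>s (r j) * norm (A i) \<le> \<epsilon>" if "i < q" for i
    proof -
      have "norm (A i) \<le> 1 + (\<Sum>i<q. norm (A i))"
        using member_le_sum[of i "{..<q}" "\<lambda>i. norm (A i)"] that by simp
      from mult_left_mono[OF this less_imp_le[OF alpha_pos[of "r j"]]] show ?thesis
        using elim(1) by linarith
    qed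
    have "xs (r j) + \<alpha>s (r j) *\<^sub>R d \<in> polyX A b q"
      if "d \<in> tangent_X A b q xstar" "norm d \<le> 1" for d
      using in_domain_iterate[of "r j"] that elim(2) alpha_pos[of "r j"] \<alpha>_norm
      by (intro add_scaleR_in_polyX[of _ A b q d "\<epsilon>"]) (auto simp: in_domain_def)
    moreover have "pos_span (Ds (r j) \<inter> tangent_X A b q xstar) = tangent_X A b q xstar"
      using \<epsilon>bar(2)[OF \<epsilon>(1,2), of "r j"] elim(2) by simp
    ultimately show ?case
      by blast
  qed
qed

lemma lipschitz_near_xstar:
  obtains \<delta> L where "0 < \<delta>" "0 < L" "cball xstar \<delta> \<subseteq> U"
    "\<And>l. l < m \<Longrightarrow> L-lipschitz_on (cball xstar \<delta>) (g l)"
    "\<And>i. i < p \<Longrightarrow> L-lipschitz_on (cball xstar \<delta>) (h i)"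
proof -
  obtain \<delta>g Lg where \<delta>g: "0 < \<delta>g" "cball xstar \<delta>g \<subseteq> U"
    and Lg: "\<And>l. l \<in> {..<m} \<Longrightarrow> Lg-lipschitz_on (cball xstar \<delta>g) (g l)"
    using C1_on_lipschitz_on_cball[of "{..<m}" U xstar g] open_U xstar_in_U C1_g by auto
  obtain \<delta>h Lh where \<delta>h: "0 < \<delta>h" "cball xstar \<delta>h \<subseteq> U"
    and Lh: "\<And>i. i \<in> {..<p} \<Longrightarrow> Lh-lipschitz_on (cball xstar \<delta>h) (h i)"
    using C1_on_lipschitz_on_cball[of "{..<p}" U xstar h] open_U xstar_in_U C1_h by auto
  have sub: "cball xstar (min \<delta>g \<delta>h) \<subseteq> cball xstar \<delta>g" "cball xstar (min \<delta>g \<delta>h) \<subseteq> cball xstar \<delta>h"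
    by (simp_all add: subset_cball)
  show ?thesis
  proof (rule that[of "min \<delta>g \<delta>h" "max 1 (max Lg Lh)"])
    show "(max 1 (max Lg Lh))-lipschitz_on (cball xstar (min \<delta>g \<delta>h)) (g l)" if "l < m" for l
      using that sub(1) by (intro lipschitz_on_mono[OF Lg]) simp_all
    show "(max 1 (max Lg Lh))-lipschitz_on (cball xstar (min \<delta>g \<delta>h)) (h i)" if "i < p" for i
      using that sub(2) by (intro lipschitz_on_mono[OF Lh]) simp_all
    show "cball xstar (min \<delta>g \<delta>h) \<subseteq> U"
      using sub(1) \<delta>g(2) by (rule order_trans)
  qed (use \<delta>g \<delta>h in simp_all)
qed

definition lipschitz_at_step :: "real \<Rightarrow> nat \<Rightarrow> bool" where
  "lipschitz_at_step L j \<longleftrightarrow> (\<forall>w\<in>cball (xs (r j)) (\<alpha>s (r j)). w \<in> U \<and>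
     (\<forall>l<m. \<bar>g l w - g l (xs (r j))\<bar> \<le> L * \<alpha>s (r j)) \<and>
     (\<forall>i<p. \<bar>h i w - h i (xs (r j))\<bar> \<le> L * \<alpha>s (r j)))"

lemma eventually_lipschitz_at_step:
  obtains L where "0 < L" "\<forall>\<^sub>F j in sequentially. lipschitz_at_step L j"
proof -
  obtain \<delta> L where "0 < \<delta>" "0 < L" "cball xstar \<delta> \<subseteq> U"
    and Lg: "\<And>l. l < m \<Longrightarrow> L-lipschitz_on (cball xstar \<delta>) (g l)"
    and Lh: "\<And>i. i < p \<Longrightarrow> L-lipschitz_on (cball xstar \<delta>) (h i)"
    by (rule lipschitz_near_xstar) blast
  have "(\<lambda>j. dist (xs (r j)) xstar + \<alpha>s (r j)) \<longlonglongrightarrow> 0"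
    using tendsto_add[OF tendsto_dist[OF r_limit tendsto_const[of xstar]] alpha_r_tendsto_0] by simp
  then have "\<forall>\<^sub>F j in sequentially. dist (xs (r j)) xstar + \<alpha>s (r j) < \<delta>"
    using \<open>0 < \<delta>\<close> by (rule order_tendstoD(2))
  then have "\<forall>\<^sub>F j in sequentially. lipschitz_at_step L j"
  proof eventually_elim
    case (elim j)
    show ?case
      unfolding lipschitz_at_step_def
    proof (intro ballI conjI allI impI)
      fix w assume w: "w \<in> cball (xs (r j)) (\<alpha>s (r j))"
      have "dist xstar w \<le> dist xstar (xs (r j)) + dist (xs (r j)) w"
        by (rule dist_triangle)
      then have balls: "w \<in> cball xstar \<delta>" "xs (r j) \<in> cball xstar \<delta>"
        using w elim alpha_pos[of "r j"] by (auto simp: dist_commute)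
      then show "w \<in> U"
        using \<open>cball xstar \<delta> \<subseteq> U\<close> by blast
      have "L * dist w (xs (r j)) \<le> L * \<alpha>s (r j)"
        using w \<open>0 < L\<close> by (simp add: dist_commute)
      then show "\<bar>g l w - g l (xs (r j))\<bar> \<le> L * \<alpha>s (r j)" if "l < m" for l
        using lipschitz_onD[OF Lg[OF that] balls] by (simp add: dist_real_def)
      show "\<bar>h i w - h i (xs (r j))\<bar> \<le> L * \<alpha>s (r j)" if "i < p" for i
        using lipschitz_onD[OF Lh[OF that] balls] \<open>L * dist w (xs (r j)) \<le> L * \<alpha>s (r j)\<close>
        by (simp add: dist_real_def)
    qed
  qed
  then show ?thesis
    using that \<open>0 < L\<close> by blast
qed

text \<open>The constraint values move by \<open>O(\<alpha>\<^sub>k)\<close> on the step ball, while the update rule keeps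
  \<open>|g\<^sub>l(x\<^sub>k)| \<ge> \<surd>(\<theta>\<^sub>\<alpha> \<alpha>\<^sub>k)\<close>, which is much larger.\<close>

lemma eventually_barrier_margin:
  "\<forall>\<^sub>F j in sequentially. \<forall>w\<in>cball (xs (r j)) (\<alpha>s (r j)). w \<in> U \<and>
     (\<forall>l\<in>GL. g l w \<le> - sqrt (\<theta>\<alpha> * \<alpha>s (r j)) / 2)"
proof -
  obtain L where L: "0 < L" and lip: "\<forall>\<^sub>F j in sequentially. lipschitz_at_step L j"
    by (rule eventually_lipschitz_at_step)
  have "\<forall>\<^sub>F j in sequentially. \<alpha>s (r j) < \<theta>\<alpha> / (4 * L\<^sup>2)"
    using order_tendstoD(2)[OF alpha_r_tendsto_0] L theta_alpha by simp
  with lip show ?thesis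
  proof eventually_elim
    case (elim j)
    define a where "a = \<alpha>s (r j)"
    define s where "s = sqrt (\<theta>\<alpha> * a)"
    have a: "0 < a"
      unfolding a_def by (rule alpha_pos)
    have "(L * a)\<^sup>2 \<le> \<theta>\<alpha> * a / 4"
      using elim(2) a L by (simp add: a_def power2_eq_square field_simps)
    then have La: "L * a \<le> s / 2"
      unfolding s_def using real_le_rsqrt by (simp add: real_sqrt_divide)
    have margin: "s \<le> - g l (xs (r j))" if "l \<in> GL" for l
    proof -
      have "s \<le> sqrt ((g l (xs (r j)))\<^sup>2)"
        unfolding s_def a_def by (intro real_sqrt_le_mono rho_decrease_step(3)[OF r_rho_decrease that])
      moreover have "g l (xs (r j)) < 0"
        using in_domain_iterate[of "r j"] that by (simp add: in_domain_def)
      ultimately show ?thesis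
        by simp
    qed
    show ?case
    proof (intro ballI conjI)
      fix w assume w: "w \<in> cball (xs (r j)) (\<alpha>s (r j))"
      then show "w \<in> U"
        using elim(1) unfolding lipschitz_at_step_def by blast
      fix l assume l: "l \<in> GL"
      then have "g l w - g l (xs (r j)) \<le> L * a"
        using elim(1) w unfolding a_def Glog_def lipschitz_at_step_def by fastforce
      then show "g l w \<le> - sqrt (\<theta>\<alpha> * \<alpha>s (r j)) / 2"
        using margin[OF l] La unfolding s_def a_def by linarith
    qed
  qed
qed

lemma penalty_ratio_tendsto_0:
  "0 < L \<Longrightarrow> (\<lambda>j. (L * \<alpha>s (r j) / \<rho>s (r j)) powr (\<nu> - 1)) \<longlonglongrightarrow> 0"
  using tendsto_mult_right_zero[OF alpha_rho_r_tendsto_0, of L] alpha_pos rho_pos nu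
  by (intro tendsto_zero_powrI[OF _ tendsto_const]) (auto intro!: always_eventually less_imp_le)

lemma barrier_lam_est_diff_tendsto_0:
  assumes u: "\<And>j. u j \<in> cball (xs (r j)) (\<alpha>s (r j))" and l: "l \<in> GL"
  shows "(\<lambda>j. lam_est (\<rho>s (r j)) l (g l (u j)) - lam_est (\<rho>s (r j)) l (g l (xs (r j)))) \<longlonglongrightarrow> 0"
proof -
  obtain L where L: "0 < L" and lip: "\<forall>\<^sub>F j in sequentially. lipschitz_at_step L j"
    by (rule eventually_lipschitz_at_step)
  show ?thesis
  proof (rule Lim_null_comparison)
    show "(\<lambda>j. 4 * L / \<theta>\<alpha> * \<rho>s (r j)) \<longlonglongrightarrow> 0"
      by (rule tendsto_mult_right_zero[OF rho_r_tendsto_0])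
    show "\<forall>\<^sub>F j in sequentially. norm (lam_est (\<rho>s (r j)) l (g l (u j)) - lam_est (\<rho>s (r j)) l (g l (xs (r j))))
        \<le> 4 * L / \<theta>\<alpha> * \<rho>s (r j)"
      using lip eventually_barrier_margin
    proof eventually_elim
      case (elim j)
      define \<sigma> where "\<sigma> = sqrt (\<theta>\<alpha> * \<alpha>s (r j)) / 2"
      have \<sigma>: "0 < \<sigma>" "\<sigma>\<^sup>2 = \<theta>\<alpha> * \<alpha>s (r j) / 4"
        using alpha_pos[of "r j"] theta_alpha by (simp_all add: \<sigma>_def power_divide)
      have "g l (u j) \<le> - \<sigma>" "g l (xs (r j)) \<le> - \<sigma>"
        using elim(2) u l alpha_pos[of "r j"] by (auto simp: \<sigma>_def)
      from inverse_neg_diff_le[OF this \<sigma>(1) less_imp_le[OF rho_pos]]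
      have "\<bar>lam_est (\<rho>s (r j)) l (g l (u j)) - lam_est (\<rho>s (r j)) l (g l (xs (r j)))\<bar>
          \<le> \<rho>s (r j) * \<bar>g l (u j) - g l (xs (r j))\<bar> / \<sigma>\<^sup>2"
        using l by (simp add: lam_est_def)
      also have "\<dots> \<le> \<rho>s (r j) * (L * \<alpha>s (r j)) / \<sigma>\<^sup>2"
        using elim(1) u l \<sigma>(1) rho_pos[of "r j"]
        by (intro divide_right_mono mult_left_mono) (auto simp: Glog_def lipschitz_at_step_def)
      also have "\<dots> = 4 * L / \<theta>\<alpha> * \<rho>s (r j)"
        using alpha_pos[of "r j"] theta_alpha unfolding \<sigma>(2) by (simp add: field_simps)
      finally show ?case
        by simp
    qed
  qed
qed

lemma lam_est_diff_tendsto_0: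
  assumes u: "\<And>j. u j \<in> cball (xs (r j)) (\<alpha>s (r j))" and l: "l < m"
  shows "(\<lambda>j. lam_est (\<rho>s (r j)) l (g l (u j)) - lam_est (\<rho>s (r j)) l (g l (xs (r j)))) \<longlonglongrightarrow> 0"
proof (cases "l \<in> GL")
  case False
  obtain L where L: "0 < L" and lip: "\<forall>\<^sub>F j in sequentially. lipschitz_at_step L j"
    by (rule eventually_lipschitz_at_step)
  show ?thesis
  proof (rule Lim_null_comparison)
    show "(\<lambda>j. \<nu> * (L * \<alpha>s (r j) / \<rho>s (r j)) powr (\<nu> - 1)) \<longlonglongrightarrow> 0"
      by (rule tendsto_mult_right_zero[OF penalty_ratio_tendsto_0[OF L]])
    show "\<forall>\<^sub>F j in sequentially. norm (lam_est (\<rho>s (r j)) l (g l (u j)) - lam_est (\<rho>s (r j)) l (g l (xs (r j))))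
        \<le> \<nu> * (L * \<alpha>s (r j) / \<rho>s (r j)) powr (\<nu> - 1)"
      using lip
    proof eventually_elim
      case (elim j)
      then have "\<bar>g l (u j) - g l (xs (r j))\<bar> \<le> L * \<alpha>s (r j)"
        using u l unfolding lipschitz_at_step_def by blast
      from scaled_max_0_powr_diff_le[OF _ _ rho_pos[of "r j"] _ this, of "\<nu> - 1" \<nu>]
      show ?case
        using False nu by (simp add: lam_est_def)
    qed
  qed
qed (rule barrier_lam_est_diff_tendsto_0[OF u])

lemma mu_est_diff_tendsto_0:
  assumes u: "\<And>j. u j \<in> cball (xs (r j)) (\<alpha>s (r j))" and i: "i < p"
  shows "(\<lambda>j. mu_est (\<rho>s (r j)) (h i (u j)) - mu_est (\<rho>s (r j)) (h i (xs (r j)))) \<longlonglongrightarrow> 0"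
proof -
  obtain L where L: "0 < L" and lip: "\<forall>\<^sub>F j in sequentially. lipschitz_at_step L j"
    by (rule eventually_lipschitz_at_step)
  then have lip_i: "\<forall>\<^sub>F j in sequentially. \<bar>h i (u j) - h i (xs (r j))\<bar> \<le> L * \<alpha>s (r j)"
    using u i by (auto simp: lipschitz_at_step_def elim!: eventually_mono)
  have mu_split: "mu_est \<rho> t = \<nu> * max t 0 powr (\<nu> - 1) / \<rho> powr (\<nu> - 1)
      - \<nu> * max (- t) 0 powr (\<nu> - 1) / \<rho> powr (\<nu> - 1)" for \<rho> t
    by (simp add: mu_est_def diff_divide_distrib right_diff_distrib)
  show ?thesis
  proof (rule Lim_null_comparison)
    show "(\<lambda>j. 2 * \<nu> * (L * \<alpha>s (r j) / \<rho>s (r j)) powr (\<nu> - 1)) \<longlonglongrightarrow> 0"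
      by (rule tendsto_mult_right_zero[OF penalty_ratio_tendsto_0[OF L]])
    show "\<forall>\<^sub>F j in sequentially. norm (mu_est (\<rho>s (r j)) (h i (u j)) - mu_est (\<rho>s (r j)) (h i (xs (r j))))
        \<le> 2 * \<nu> * (L * \<alpha>s (r j) / \<rho>s (r j)) powr (\<nu> - 1)"
      using lip_i
    proof eventually_elim
      case (elim j)
      have "\<bar>- h i (u j) - - h i (xs (r j))\<bar> \<le> L * \<alpha>s (r j)"
        using elim by simp
      with scaled_max_0_powr_diff_le[OF _ _ rho_pos[of "r j"] _ elim, of "\<nu> - 1" \<nu>]
        scaled_max_0_powr_diff_le[OF _ _ rho_pos[of "r j"] _ this, of "\<nu> - 1" \<nu>]
      show ?case
        using nu unfolding mu_split real_norm_def abs_le_iff by linarith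
    qed
  qed
qed

definition lam_r :: "nat \<Rightarrow> nat \<Rightarrow> real" where
  "lam_r j l = lam_est (\<rho>s (r j)) l (g l (xs (r j)))"

definition mu_r :: "nat \<Rightarrow> nat \<Rightarrow> real" where
  "mu_r j i = mu_est (\<rho>s (r j)) (h i (xs (r j)))"

definition normalizer :: "nat \<Rightarrow> real" where
  "normalizer j = 1 + (\<Sum>l<m. lam_r j l) + (\<Sum>i<p. \<bar>mu_r j i\<bar>)"

lemma lam_r_nonneg: "0 \<le> lam_r j l"
  using in_domain_iterate[of "r j"] rho_pos[of "r j"]
  unfolding lam_r_def in_domain_def by (intro lam_est_nonneg) auto

lemma normalizer_ge_1: "1 \<le> normalizer j"
  using lam_r_nonneg by (simp add: normalizer_def sum_nonneg)

lemma lam_r_le_normalizer: "l < m \<Longrightarrow> lam_r j l \<le> normalizer j"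
  using member_le_sum[of l "{..<m}" "lam_r j"] lam_r_nonneg
  by (simp add: normalizer_def sum_nonneg add_increasing2)

lemma abs_mu_r_le_normalizer: "i < p \<Longrightarrow> \<bar>mu_r j i\<bar> \<le> normalizer j"
  using member_le_sum[of i "{..<p}" "\<lambda>i. \<bar>mu_r j i\<bar>"] lam_r_nonneg
  by (simp add: normalizer_def sum_nonneg add_increasing)

lemma inverse_normalizer_eq:
  "1 / normalizer j = 1 - (\<Sum>l<m. lam_r j l / normalizer j) - (\<Sum>i<p. \<bar>mu_r j i / normalizer j\<bar>)"
  using normalizer_ge_1[of j]
  by (simp add: sum_divide_distrib[symmetric] field_simps normalizer_def)

lemma divide_normalizer_tendsto_0:
  assumes "d \<longlonglongrightarrow> 0" "strict_mono R"
  shows "(\<lambda>n. d (R n) / normalizer (R n)) \<longlonglongrightarrow> 0"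
proof (rule Lim_null_comparison)
  show "\<forall>\<^sub>F n in sequentially. norm (d (R n) / normalizer (R n)) \<le> norm (d (R n))"
  proof (intro always_eventually allI)
    fix n
    have "\<bar>d (R n)\<bar> \<le> \<bar>d (R n)\<bar> * normalizer (R n)"
      using normalizer_ge_1[of "R n"] by (simp add: mult_le_cancel_left1)
    then show "norm (d (R n) / normalizer (R n)) \<le> norm (d (R n))"
      using normalizer_ge_1[of "R n"] by (simp add: abs_divide divide_le_eq)
  qed
  show "(\<lambda>n. norm (d (R n))) \<longlonglongrightarrow> 0"
    using tendsto_norm_zero[OF LIMSEQ_subseq_LIMSEQ[OF assms]] by (simp add: o_def)
qed

lemma cball_seq_tendsto:
  assumes "\<And>j. u j \<in> cball (xs (r j)) (\<alpha>s (r j))"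
  shows "u \<longlonglongrightarrow> xstar"
proof -
  have "(\<lambda>j. u j - xs (r j)) \<longlonglongrightarrow> 0"
    using assms by (intro Lim_null_comparison[OF _ alpha_r_tendsto_0] always_eventually)
      (simp add: dist_norm norm_minus_commute)
  from tendsto_add[OF r_limit this] show ?thesis
    by simp
qed

lemma isCont_grad_at_xstar:
  "isCont (grad f) xstar" "l < m \<Longrightarrow> isCont (grad (g l)) xstar" "i < p \<Longrightarrow> isCont (grad (h i)) xstar"
  using C1_f C1_g C1_h open_U xstar_in_U
  by (auto simp: C1_on_def continuous_on_eq_continuous_at)

lemma isCont_constraints_at_xstar:
  "l < m \<Longrightarrow> isCont (g l) xstar" "i < p \<Longrightarrow> isCont (h i) xstar"
  using C1_g C1_h xstar_in_U by (auto simp: C1_on_def intro: differentiable_imp_continuous_within)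

lemma normalized_merit_grad_tendsto:
  assumes R: "strict_mono R"
    and lam: "\<And>l. l < m \<Longrightarrow> (\<lambda>n. lam_r (R n) l / normalizer (R n)) \<longlonglongrightarrow> lam l"
    and mu: "\<And>i. i < p \<Longrightarrow> (\<lambda>n. mu_r (R n) i / normalizer (R n)) \<longlonglongrightarrow> mu i"
    and u: "\<And>j. u j \<in> cball (xs (r j)) (\<alpha>s (r j))"
  shows "(\<lambda>n. merit_grad (\<rho>s (r (R n))) (u (R n)) /\<^sub>R normalizer (R n))
    \<longlonglongrightarrow> lagrangian_grad f g h m p xstar (1 - (\<Sum>l<m. lam l) - (\<Sum>i<p. \<bar>mu i\<bar>)) lam mu"
proof -
  have uR: "(\<lambda>n. u (R n)) \<longlonglongrightarrow> xstar"
    using LIMSEQ_subseq_LIMSEQ[OF cball_seq_tendsto[OF u] R] by (simp add: o_def)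
  have lam_u: "(\<lambda>n. lam_est (\<rho>s (r (R n))) l (g l (u (R n))) / normalizer (R n)) \<longlonglongrightarrow> lam l" if "l < m" for l
    using tendsto_add[OF lam[OF that] divide_normalizer_tendsto_0[OF lam_est_diff_tendsto_0[OF u that] R]]
    by (simp add: lam_r_def diff_divide_distrib)
  have mu_u: "(\<lambda>n. mu_est (\<rho>s (r (R n))) (h i (u (R n))) / normalizer (R n)) \<longlonglongrightarrow> mu i" if "i < p" for i
    using tendsto_add[OF mu[OF that] divide_normalizer_tendsto_0[OF mu_est_diff_tendsto_0[OF u that] R]]
    by (simp add: mu_r_def diff_divide_distrib)
  have "(\<lambda>n. 1 / normalizer (R n)) \<longlonglongrightarrow> 1 - (\<Sum>l<m. lam l) - (\<Sum>i<p. \<bar>mu i\<bar>)"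
    unfolding inverse_normalizer_eq by (intro tendsto_intros lam mu) auto
  then have "(\<lambda>n. lagrangian_grad f g h m p (u (R n)) (1 / normalizer (R n))
      (\<lambda>l. lam_est (\<rho>s (r (R n))) l (g l (u (R n))) / normalizer (R n))
      (\<lambda>i. mu_est (\<rho>s (r (R n))) (h i (u (R n))) / normalizer (R n)))
    \<longlonglongrightarrow> lagrangian_grad f g h m p xstar (1 - (\<Sum>l<m. lam l) - (\<Sum>i<p. \<bar>mu i\<bar>)) lam mu"
    unfolding lagrangian_grad_def
    by (intro tendsto_intros lam_u mu_u isCont_tendsto_compose[OF _ uR] isCont_grad_at_xstar) auto
  then show ?thesis
    by (simp add: merit_grad_def lagrangian_grad_def scaleR_add_right scaleR_sum_right divide_inverse_commute)
qed

lemma forcing_ratio_tendsto_0: "(\<lambda>j. \<xi> (\<alpha>s (r j)) / \<alpha>s (r j)) \<longlonglongrightarrow> 0"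
proof -
  have "((\<lambda>t. \<xi> t / t) \<longlongrightarrow> 0) (at_right 0)"
    using forcing unfolding forcing_function_def by blast
  moreover have "filterlim (\<lambda>j. \<alpha>s (r j)) (at_right 0) sequentially"
    using alpha_pos by (intro tendsto_imp_filterlim_at_right alpha_r_tendsto_0 always_eventually) simp
  ultimately show ?thesis
    by (rule filterlim_compose)
qed

lemma eventually_cball_in_domain:
  "\<forall>\<^sub>F j in sequentially. \<forall>w\<in>cball (xs (r j)) (\<alpha>s (r j)). w \<in> U \<and> (\<forall>l\<in>GL. g l w < 0)"
  using eventually_barrier_margin
proof eventually_elim
  case (elim j)
  have pos: "0 < sqrt (\<theta>\<alpha> * \<alpha>s (r j))"
    using alpha_pos[of "r j"] theta_alpha by simp
  show ?case
  proof (intro ballI conjI)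
    fix w assume w: "w \<in> cball (xs (r j)) (\<alpha>s (r j))"
    then show "w \<in> U"
      using elim by blast
    fix l assume "l \<in> GL"
    then have "g l w \<le> - sqrt (\<theta>\<alpha> * \<alpha>s (r j)) / 2"
      using elim w by blast
    then show "g l w < 0"
      using pos by linarith
  qed
qed

lemma poll_mvt_points:
  assumes d: "d \<in> tangent_X A b q xstar" "norm d = 1"
  obtains u where "\<And>j. u j \<in> cball (xs (r j)) (\<alpha>s (r j))"
    "\<forall>\<^sub>F j in sequentially. d \<in> Ds (r j) \<longrightarrow>
       - \<xi> (\<alpha>s (r j)) / \<alpha>s (r j) < merit_grad (\<rho>s (r j)) (u j) \<bullet> d"
proof -
  define P where "P j v \<longleftrightarrow> v \<in> cball (xs (r j)) (\<alpha>s (r j)) \<and>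
      - \<xi> (\<alpha>s (r j)) / \<alpha>s (r j) < merit_grad (\<rho>s (r j)) v \<bullet> d" for j v
  define u where "u j = (if \<exists>v. P j v then SOME v. P j v else xs (r j))" for j
  have P_u: "P j (u j)" if "\<exists>v. P j v" for j
    using someI_ex[OF that] that by (simp add: u_def)
  have u_cball: "u j \<in> cball (xs (r j)) (\<alpha>s (r j))" for j
    using P_u[of j] alpha_pos[of "r j"] by (cases "\<exists>v. P j v") (auto simp: u_def P_def)
  have "\<forall>\<^sub>F j in sequentially. d \<in> Ds (r j) \<longrightarrow> P j (u j)"
    using eventually_poll_cone eventually_cball_in_domain
  proof eventually_elim
    case (elim j)
    show ?case
    proof
      assume "d \<in> Ds (r j)"
      moreover have "xs (r j) + \<alpha>s (r j) *\<^sub>R d \<in> polyX A b q"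
        using elim(1) d by simp
      ultimately have "\<exists>v. P j v"
        using poll_step_mvt[OF r_rho_decrease _ d(2)] elim(2) unfolding P_def by blast
      then show "P j (u j)"
        by (rule P_u)
    qed
  qed
  then have "\<forall>\<^sub>F j in sequentially. d \<in> Ds (r j) \<longrightarrow>
      - \<xi> (\<alpha>s (r j)) / \<alpha>s (r j) < merit_grad (\<rho>s (r j)) (u j) \<bullet> d"
    by (rule eventually_mono) (simp add: P_def)
  then show ?thesis
    using that[OF u_cball] by blast
qed

lemma fritz_john_direction:
  assumes R: "strict_mono R"
    and lam: "\<And>l. l < m \<Longrightarrow> (\<lambda>n. lam_r (R n) l / normalizer (R n)) \<longlonglongrightarrow> lam l"
    and mu: "\<And>i. i < p \<Longrightarrow> (\<lambda>n. mu_r (R n) i / normalizer (R n)) \<longlonglongrightarrow> mu i"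
    and d: "d \<in> tangent_X A b q xstar" "norm d = 1" "\<And>n. d \<in> Ds (r (R n))"
  shows "0 \<le> lagrangian_grad f g h m p xstar (1 - (\<Sum>l<m. lam l) - (\<Sum>i<p. \<bar>mu i\<bar>)) lam mu \<bullet> d"
proof -
  obtain u where u: "\<And>j. u j \<in> cball (xs (r j)) (\<alpha>s (r j))"
    and mvt: "\<forall>\<^sub>F j in sequentially. d \<in> Ds (r j) \<longrightarrow>
       - \<xi> (\<alpha>s (r j)) / \<alpha>s (r j) < merit_grad (\<rho>s (r j)) (u j) \<bullet> d"
    using poll_mvt_points[OF d(1,2)] by blast
  from eventually_subseq[OF R mvt] have "\<forall>\<^sub>F n in sequentially. - (\<xi> (\<alpha>s (r (R n))) / \<alpha>s (r (R n)))
      \<le> (merit_grad (\<rho>s (r (R n))) (u (R n)) /\<^sub>R normalizer (R n)) \<bullet> d"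
  proof eventually_elim
    case (elim n)
    define \<kappa> where "\<kappa> = \<xi> (\<alpha>s (r (R n))) / \<alpha>s (r (R n))"
    have "0 \<le> \<kappa>"
      using forcing alpha_pos[of "r (R n)"] by (simp add: \<kappa>_def forcing_function_def)
    then have "- \<kappa> \<le> - \<kappa> / normalizer (R n)"
      using normalizer_ge_1[of "R n"] by (simp add: divide_le_eq mult_le_cancel_left1)
    also have "\<dots> \<le> merit_grad (\<rho>s (r (R n))) (u (R n)) \<bullet> d / normalizer (R n)"
      using elim d(3) normalizer_ge_1[of "R n"] by (intro divide_right_mono) (auto simp: \<kappa>_def)
    finally show ?case
      by (simp add: \<kappa>_def divide_inverse_commute)
  qed
  moreover have "(\<lambda>n. - (\<xi> (\<alpha>s (r (R n))) / \<alpha>s (r (R n)))) \<longlonglongrightarrow> 0"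
    using tendsto_minus[OF LIMSEQ_subseq_LIMSEQ[OF forcing_ratio_tendsto_0 R]] by (simp add: o_def)
  moreover note tendsto_inner[OF normalized_merit_grad_tendsto[OF R lam mu u] tendsto_const[of d]]
  ultimately show ?thesis
    by (intro LIMSEQ_le[of _ 0 _ _]) (auto simp: eventually_sequentially)
qed

lemma normalized_multipliers_convergent_subseq:
  obtains R :: "nat \<Rightarrow> nat" and S lam mu where "strict_mono R"
    "\<And>n. Ds (r (R n)) \<inter> tangent_X A b q xstar = S"
    "\<And>l. l < m \<Longrightarrow> (\<lambda>n. lam_r (R n) l / normalizer (R n)) \<longlonglongrightarrow> lam l"
    "\<And>i. i < p \<Longrightarrow> (\<lambda>n. mu_r (R n) i / normalizer (R n)) \<longlonglongrightarrow> mu i"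
proof -
  have "range (\<lambda>j. Ds (r j) \<inter> tangent_X A b q xstar) \<subseteq> Pow (\<Union>k. Ds k)"
    by auto
  moreover have "finite (\<Union>k. Ds k)"
    using poll unfolding poll_direction_assumption_def by blast
  ultimately obtain R1 :: "nat \<Rightarrow> nat" where R1: "strict_mono R1"
    "\<And>n. Ds (r (R1 n)) \<inter> tangent_X A b q xstar = Ds (r (R1 0)) \<inter> tangent_X A b q xstar"
    using finite_range_imp_constant_subseq[of "\<lambda>j. Ds (r j) \<inter> tangent_X A b q xstar"]
    by (metis (no_types, lifting) finite_Pow_iff finite_subset)
  define c where "c n = case_sum (\<lambda>l. lam_r (R1 n) l / normalizer (R1 n)) (\<lambda>i. mu_r (R1 n) i / normalizer (R1 n))"
    for n
  have "bounded (range (\<lambda>n. c n k))" if "k \<in> Inl ` {..<m} \<union> Inr ` {..<p}" for k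
  proof -
    have "\<bar>c n k\<bar> \<le> 1" for n
      using that lam_r_nonneg lam_r_le_normalizer abs_mu_r_le_normalizer normalizer_ge_1[of "R1 n"]
      by (auto simp: c_def abs_divide divide_le_eq)
    then show ?thesis
      unfolding bounded_iff by auto
  qed
  then obtain R2 :: "nat \<Rightarrow> nat" and lim where R2: "strict_mono R2"
    and lim: "\<And>k. k \<in> Inl ` {..<m} \<union> Inr ` {..<p} \<Longrightarrow> (\<lambda>n. c (R2 n) k) \<longlonglongrightarrow> lim k"
    using bounded_imp_convergent_subseq_family[of "Inl ` {..<m} \<union> Inr ` {..<p}" c] by blast
  show ?thesis
  proof (rule that[of "R1 \<circ> R2" _ "lim \<circ> Inl" "lim \<circ> Inr"])
    show "strict_mono (R1 \<circ> R2)"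
      using R1(1) R2 by (rule strict_mono_o)
    show "Ds (r ((R1 \<circ> R2) n)) \<inter> tangent_X A b q xstar = Ds (r (R1 0)) \<inter> tangent_X A b q xstar" for n
      using R1(2) by simp
    show "(\<lambda>n. lam_r ((R1 \<circ> R2) n) l / normalizer ((R1 \<circ> R2) n)) \<longlonglongrightarrow> (lim \<circ> Inl) l" if "l < m" for l
      using lim[of "Inl l"] that by (simp add: c_def)
    show "(\<lambda>n. mu_r ((R1 \<circ> R2) n) i / normalizer ((R1 \<circ> R2) n)) \<longlonglongrightarrow> (lim \<circ> Inr) i" if "i < p" for i
      using lim[of "Inr i"] that by (simp add: c_def)
  qed
qed

lemma inactive_multiplier_tendsto_0:
  assumes R: "strict_mono R" and l: "l < m" "g l xstar < 0"
  shows "(\<lambda>n. lam_r (R n) l / normalizer (R n)) \<longlonglongrightarrow> 0"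
proof (rule divide_normalizer_tendsto_0[OF _ R])
  have g_lim: "(\<lambda>j. g l (xs (r j))) \<longlonglongrightarrow> g l xstar"
    by (intro isCont_tendsto_compose[OF _ r_limit] isCont_constraints_at_xstar l)
  show "(\<lambda>j. lam_r j l) \<longlonglongrightarrow> 0"
  proof (cases "l \<in> GL")
    case True
    have "(\<lambda>j. \<rho>s (r j) / - g l (xs (r j))) \<longlonglongrightarrow> 0 / - g l xstar"
      using l(2) by (intro tendsto_intros rho_r_tendsto_0 g_lim) simp
    then show ?thesis
      using True by (simp add: lam_r_def lam_est_def)
  next
    case False
    have "\<forall>\<^sub>F j in sequentially. g l (xs (r j)) < 0"
      using order_tendstoD(2)[OF g_lim l(2)] .
    then have "\<forall>\<^sub>F j in sequentially. lam_r j l = 0"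
      by (rule eventually_mono) (use False in \<open>simp add: lam_r_def lam_est_def max_def\<close>)
    then show ?thesis
      by (rule tendsto_eventually)
  qed
qed

lemma fritz_john_tangent_cone:
  assumes R: "strict_mono R" and S: "\<And>n. Ds (r (R n)) \<inter> tangent_X A b q xstar = S"
    and lam: "\<And>l. l < m \<Longrightarrow> (\<lambda>n. lam_r (R n) l / normalizer (R n)) \<longlonglongrightarrow> lam l"
    and mu: "\<And>i. i < p \<Longrightarrow> (\<lambda>n. mu_r (R n) i / normalizer (R n)) \<longlonglongrightarrow> mu i"
    and t: "t \<in> tangent_X A b q xstar"
  shows "0 \<le> lagrangian_grad f g h m p xstar (1 - (\<Sum>l<m. lam l) - (\<Sum>i<p. \<bar>mu i\<bar>)) lam mu \<bullet> t"
proof (rule pos_span_inner_nonneg)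
  obtain N where "\<forall>n\<ge>N. pos_span (Ds (r (R n)) \<inter> tangent_X A b q xstar) = tangent_X A b q xstar"
    using eventually_subseq[OF R eventually_poll_cone] unfolding eventually_sequentially by blast
  then show "t \<in> pos_span S"
    using t S[of N] by auto
  fix d assume d: "d \<in> S"
  have "norm d = 1"
    using poll d S[of 0] unfolding poll_direction_assumption_def by blast
  moreover have "d \<in> tangent_X A b q xstar" "\<And>n. d \<in> Ds (r (R n))"
    using d S by blast+
  ultimately show "0 \<le> lagrangian_grad f g h m p xstar (1 - (\<Sum>l<m. lam l) - (\<Sum>i<p. \<bar>mu i\<bar>)) lam mu \<bullet> d"
    using fritz_john_direction[OF R lam mu] by blast
qed

lemma fritz_john_at_limit:
  obtains R :: "nat \<Rightarrow> nat" and \<tau> lam mu where "strict_mono R"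
    "(\<lambda>n. 1 / normalizer (R n)) \<longlonglongrightarrow> \<tau>"
    "\<And>l. l < m \<Longrightarrow> (\<lambda>n. lam_r (R n) l / normalizer (R n)) \<longlonglongrightarrow> lam l"
    "\<And>i. i < p \<Longrightarrow> (\<lambda>n. mu_r (R n) i / normalizer (R n)) \<longlonglongrightarrow> mu i"
    "\<tau> + (\<Sum>l<m. lam l) + (\<Sum>i<p. \<bar>mu i\<bar>) = 1"
    "0 \<le> \<tau>" "\<And>l. l < m \<Longrightarrow> 0 \<le> lam l" "\<And>l. l < m \<Longrightarrow> g l xstar < 0 \<Longrightarrow> lam l = 0"
    "\<And>t. t \<in> tangent_X A b q xstar \<Longrightarrow> 0 \<le> lagrangian_grad f g h m p xstar \<tau> lam mu \<bullet> t"
proof -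
  obtain R :: "nat \<Rightarrow> nat" and S lam mu where R: "strict_mono R"
    and S: "\<And>n. Ds (r (R n)) \<inter> tangent_X A b q xstar = S"
    and lam: "\<And>l. l < m \<Longrightarrow> (\<lambda>n. lam_r (R n) l / normalizer (R n)) \<longlonglongrightarrow> lam l"
    and mu: "\<And>i. i < p \<Longrightarrow> (\<lambda>n. mu_r (R n) i / normalizer (R n)) \<longlonglongrightarrow> mu i"
    using normalized_multipliers_convergent_subseq by blast
  define \<tau> where "\<tau> = 1 - (\<Sum>l<m. lam l) - (\<Sum>i<p. \<bar>mu i\<bar>)"
  have \<tau>: "(\<lambda>n. 1 / normalizer (R n)) \<longlonglongrightarrow> \<tau>"
    unfolding inverse_normalizer_eq \<tau>_def by (intro tendsto_intros lam mu) auto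
  have "0 \<le> 1 / normalizer j" for j
    using normalizer_ge_1[of j] by simp
  then have "0 \<le> \<tau>"
    by (intro LIMSEQ_le_const[OF \<tau>]) auto
  moreover have "0 \<le> lam l" if "l < m" for l
  proof -
    have "0 \<le> lam_r j l / normalizer j" for j
      using lam_r_nonneg[of j l] normalizer_ge_1[of j] by simp
    then show ?thesis
      by (intro LIMSEQ_le_const[OF lam[OF that]]) auto
  qed
  moreover have "lam l = 0" if "l < m" "g l xstar < 0" for l
    using LIMSEQ_unique[OF lam[OF that(1)] inactive_multiplier_tendsto_0[OF R that]] .
  moreover have "0 \<le> lagrangian_grad f g h m p xstar \<tau> lam mu \<bullet> t"
    if "t \<in> tangent_X A b q xstar" for t
    unfolding \<tau>_def by (rule fritz_john_tangent_cone[OF R S lam mu that])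
  ultimately show ?thesis
    by (intro that[OF R \<tau> lam mu]) (auto simp: \<tau>_def)
qed

lemma scaled_violation_tendsto_0:
  assumes R: "strict_mono R" and a: "a \<longlonglongrightarrow> c" and v: "v \<longlonglongrightarrow> v0"
    and eq: "\<And>n. v n = a n * (\<rho>s (r (R n)) powr (\<nu> - 1) / \<nu>)"
  shows "v0 = 0"
proof -
  have "(\<lambda>n. \<rho>s (r (R n)) powr (\<nu> - 1) / \<nu>) \<longlonglongrightarrow> 0"
    using LIMSEQ_subseq_LIMSEQ[OF rho_r_powr_tendsto_0 R, of "\<nu> - 1"] nu
    by (simp add: o_def tendsto_divide_zero)
  from tendsto_mult[OF a this] have "v \<longlonglongrightarrow> 0"
    unfolding eq[symmetric] by simp
  with v show ?thesis
    by (rule LIMSEQ_unique)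
qed

lemma feasible_if_multipliers_converge:
  assumes R: "strict_mono R"
    and lam: "\<And>l. l < m \<Longrightarrow> (\<lambda>n. lam_r (R n) l) \<longlonglongrightarrow> \<Lambda> l"
    and mu: "\<And>i. i < p \<Longrightarrow> (\<lambda>n. mu_r (R n) i) \<longlonglongrightarrow> M i"
  shows "xstar \<in> feasible_set g h m p A b q"
proof -
  have xR: "(\<lambda>n. xs (r (R n))) \<longlonglongrightarrow> xstar"
    using LIMSEQ_subseq_LIMSEQ[OF r_limit R] by (simp add: o_def)
  have "g l xstar \<le> 0" if l: "l < m" for l
  proof (cases "l \<in> GL")
    case True
    then have "g l (xs (r (R n))) \<le> 0" for n
      using in_domain_iterate[of "r (R n)"] by (auto simp: in_domain_def less_imp_le)
    then show ?thesis
      by (intro LIMSEQ_le_const2[OF isCont_tendsto_compose[OF isCont_constraints_at_xstar(1)[OF l] xR]]) auto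
  next
    case False
    have "max (g l xstar) 0 powr (\<nu> - 1) = 0"
    proof (rule scaled_violation_tendsto_0[OF R lam[OF l]])
      show "(\<lambda>n. max (g l (xs (r (R n)))) 0 powr (\<nu> - 1)) \<longlonglongrightarrow> max (g l xstar) 0 powr (\<nu> - 1)"
        using nu by (intro tendsto_intros isCont_tendsto_compose[OF isCont_constraints_at_xstar(1)[OF l] xR]) auto
      show "max (g l (xs (r (R n)))) 0 powr (\<nu> - 1) = lam_r (R n) l * (\<rho>s (r (R n)) powr (\<nu> - 1) / \<nu>)" for n
        using False nu rho_pos[of "r (R n)"] by (simp add: lam_r_def lam_est_def)
    qed
    then show ?thesis
      by simp
  qed
  moreover have "h i xstar = 0" if i: "i < p" for i
  proof -
    have "\<bar>h i xstar\<bar> powr (\<nu> - 1) = 0"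
    proof (rule scaled_violation_tendsto_0[OF R tendsto_rabs[OF mu[OF i]]])
      show "(\<lambda>n. \<bar>h i (xs (r (R n)))\<bar> powr (\<nu> - 1)) \<longlonglongrightarrow> \<bar>h i xstar\<bar> powr (\<nu> - 1)"
        using nu by (intro tendsto_intros isCont_tendsto_compose[OF isCont_constraints_at_xstar(2)[OF i] xR]) auto
      show "\<bar>h i (xs (r (R n)))\<bar> powr (\<nu> - 1) = \<bar>mu_r (R n) i\<bar> * (\<rho>s (r (R n)) powr (\<nu> - 1) / \<nu>)" for n
        using nu rho_pos[of "r (R n)"]
        by (cases "h i (xs (r (R n))) \<ge> 0") (auto simp: mu_r_def mu_est_def abs_mult)
    qed
    then show ?thesis
      by simp
  qed
  ultimately show ?thesis
    using xstar_in_polyX by (simp add: feasible_set_def)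
qed

lemma unnormalized_tendsto:
  assumes "(\<lambda>n. 1 / normalizer (R n)) \<longlonglongrightarrow> \<tau>" "\<tau> \<noteq> 0"
    and "(\<lambda>n. a n / normalizer (R n)) \<longlonglongrightarrow> c"
  shows "a \<longlonglongrightarrow> c / \<tau>"
proof -
  have "(\<lambda>n. (a n / normalizer (R n)) / (1 / normalizer (R n))) \<longlonglongrightarrow> c / \<tau>"
    using assms by (intro tendsto_divide)
  moreover have "(a n / normalizer (R n)) / (1 / normalizer (R n)) = a n" for n
    using normalizer_ge_1[of "R n"] by simp
  ultimately show ?thesis
    by simp
qed

lemma MFCQ_imp_stationary_point:
  assumes mfcq: "MFCQ g h m p A b q xstar"
  shows "stationary_point f g h m p A b q xstar"
proof -
  obtain R :: "nat \<Rightarrow> nat" and \<tau> lam mu where R: "strict_mono R"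
    and \<tau>: "(\<lambda>n. 1 / normalizer (R n)) \<longlonglongrightarrow> \<tau>"
    and lam: "\<And>l. l < m \<Longrightarrow> (\<lambda>n. lam_r (R n) l / normalizer (R n)) \<longlonglongrightarrow> lam l"
    and mu: "\<And>i. i < p \<Longrightarrow> (\<lambda>n. mu_r (R n) i / normalizer (R n)) \<longlonglongrightarrow> mu i"
    and fj: "\<tau> + (\<Sum>l<m. lam l) + (\<Sum>i<p. \<bar>mu i\<bar>) = 1" "0 \<le> \<tau>"
      "\<And>l. l < m \<Longrightarrow> 0 \<le> lam l" "\<And>l. l < m \<Longrightarrow> g l xstar < 0 \<Longrightarrow> lam l = 0"
      "\<And>t. t \<in> tangent_X A b q xstar \<Longrightarrow> 0 \<le> lagrangian_grad f g h m p xstar \<tau> lam mu \<bullet> t"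
    using fritz_john_at_limit by blast
  have "0 < \<tau>"
    using fj by (intro MFCQ_imp_pos_objective_multiplier[OF mfcq]; blast)
  then have "xstar \<in> feasible_set g h m p A b q"
  proof (intro feasible_if_multipliers_converge[OF R])
    show "(\<lambda>n. lam_r (R n) l) \<longlonglongrightarrow> lam l / \<tau>" if "l < m" for l
      using unnormalized_tendsto[OF \<tau> _ lam[OF that]] \<open>0 < \<tau>\<close> by simp
    show "(\<lambda>n. mu_r (R n) i) \<longlonglongrightarrow> mu i / \<tau>" if "i < p" for i
      using unnormalized_tendsto[OF \<tau> _ mu[OF that]] \<open>0 < \<tau>\<close> by simp
  qed
  then show ?thesis
    using \<open>0 < \<tau>\<close> fj by (intro fritz_john_imp_stationary_point; blast)
qed

end

theorem theorem3p5:
  fixes f :: "'a::euclidean_space \<Rightarrow> real"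
    and g h :: "nat \<Rightarrow> 'a \<Rightarrow> real"
    and m p q :: nat
    and A :: "nat \<Rightarrow> 'a" and b :: "nat \<Rightarrow> real"
    and \<nu> \<theta>\<alpha> \<theta>\<rho> \<phi> \<beta> :: real
    and \<xi> :: "real \<Rightarrow> real"
    and xs :: "nat \<Rightarrow> 'a" and \<alpha>s \<rho>s :: "nat \<Rightarrow> real" and Ds :: "nat \<Rightarrow> 'a set"
  assumes C1: "\<exists>U. open U \<and> polyX A b q \<subseteq> U \<and> C1_on U f \<and>
                   (\<forall>l<m. C1_on U (g l)) \<and> (\<forall>j<p. C1_on U (h j))"
    and Glog_ne: "Glog g m (xs 0) \<noteq> {}"
    and cpt: "compact (polyX A b q \<inter> Omega_log g m (xs 0))"
    and x0X: "xs 0 \<in> polyX A b q"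
    and x0int: "\<forall>l\<in>Glog g m (xs 0). g l (xs 0) < 0"
    and alpha0: "\<alpha>s 0 > 0" and rho0: "\<rho>s 0 > 0"
    and nu: "1 < \<nu>" "\<nu> \<le> 2"
    and theta_alpha: "0 < \<theta>\<alpha>" "\<theta>\<alpha> < 1"
    and theta_rho: "0 < \<theta>\<rho>" "\<theta>\<rho> < 1"
    and phi: "\<phi> \<ge> 1" and beta: "\<beta> > 1"
    and forcing: "forcing_function \<xi>"
    and iter: "\<forall>k. logds_step f g h m p A b q \<nu> \<theta>\<alpha> \<theta>\<rho> \<phi> \<beta> \<xi> xs \<alpha>s \<rho>s Ds k"
    and poll: "poll_direction_assumption A b q xs Ds"
  shows "\<forall>xstar (r :: nat \<Rightarrow> nat).
           strict_mono r \<and> (\<forall>j. r j \<in> {k. \<rho>s (Suc k) < \<rho>s k}) \<and>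
           (\<lambda>j. xs (r j)) \<longlonglongrightarrow> xstar \<and> MFCQ g h m p A b q xstar
           \<longrightarrow> stationary_point f g h m p A b q xstar"
proof (intro allI impI, elim conjE)
  fix xstar and r :: "nat \<Rightarrow> nat"
  assume r: "strict_mono r" "\<forall>j. r j \<in> {k. \<rho>s (Suc k) < \<rho>s k}" "(\<lambda>j. xs (r j)) \<longlonglongrightarrow> xstar"
    and mfcq: "MFCQ g h m p A b q xstar"
  obtain U where U: "open U" "polyX A b q \<subseteq> U" "C1_on U f" "\<forall>l<m. C1_on U (g l)" "\<forall>j<p. C1_on U (h j)"
    using C1 by blast
  interpret logds_limit f g h m p q A b \<nu> \<theta>\<alpha> \<theta>\<rho> \<phi> \<beta> \<xi> xs \<alpha>s \<rho>s Ds U xstar r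
    using U r x0X x0int alpha0 rho0 nu theta_alpha theta_rho phi beta forcing iter poll
    by unfold_locales simp_all
  show "stationary_point f g h m p A b q xstar"
    using mfcq by (rule MFCQ_imp_stationary_point)
qed

end
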